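(* Let $q\in\mathbb C\setminus\{0\}$ not be a root of unity, $A=\mathbb C[x]$ the braided line and $\sigma=\sigma_\lambda$ ($\lambda\ne0$). Then for all $n\ge0$, $HC^{\Psi,\sigma}_{2n+1}(A)=0$ and $HC^{\Psi,\sigma}_{2n+2}(A)=\mathbb C[1]$, while $HC^{\Psi,\sigma}_0(A)=\mathbb C[1]$ if $\lambda\notin\{q^{-N}:N\in\{0,1,2,\dots\}\}$ and $HC^{\Psi,\sigma}_0(A)=\mathbb C[1]\oplus\mathbb C[x^{N+1}]$ if $\lambda=q^{-N}$.
   Context: $H=\mathbb C[t,t^{-1}]$ with $\Delta(t)=t\otimes t$, $\mathbf r(t^m,t^n)=q^{mn}$; $A=\mathbb C[x]$ with coaction $x^m\mapsto x^m\otimes t^m$, braiding $\Psi(x^m\otimes x^n)=q^{mn}x^n\otimes x^m$, primitive $x$ ($\Delta x=x\otimes1+1\otimes x$, $\varepsilon(x)=0$, $S(x)=-x$). $\sigma_\lambda(x^n)=\lambda^nq^{n(n-1)}x^n$. Composition right to left; on $A^{\otimes(n+1)}$ (factors $0,\dots,n$), $f_{i,i+1}$ is $f$ on factors $i,i+1$, $\Psi_{[0,n-1],n}=\Psi_{0,1}\cdots\Psi_{n-1,n}$. Faces $d_j=\mu_{j,j+1}$ ($0\le j\le n-1$), $d_n=\mu_{0,1}(\sigma\otimes\mathrm{id}^{\otimes n})\Psi_{[0,n-1],n}$; degeneracies $s_i=\mathrm{id}^{\otimes(i+1)}\otimes\eta\otimes\mathrm{id}^{\otimes(n-i)}$; cyclic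 operators $t_n=(\sigma\otimes\mathrm{id}^{\otimes n})\Psi_{[0,n-1],n}$, $T_n=t_n^{n+1}$. These descend to $C_n^{\Psi,\sigma}=\mathrm{coker}(\mathrm{id}-T_n)$, forming a cyclic vector space; $HC^{\Psi,\sigma}_*(A)$ is its cyclic homology in the sense of Connes. *)

theory Defs
  imports Complex_Main "HOL-Library.Function_Algebras"
begin

text \<open>Elements of A^{(n+1) tensor power}, A = C[x], are finitely supported
  functions on words [a_0,...,a_n] of exponents; the word w stands for the
  basis tensor x^{a_0} (x) ... (x) x^{a_n}.\<close>

definition tens :: "nat \<Rightarrow> (nat list \<Rightarrow> complex) set" where
  "tens n = {f. finite {w. f w \<noteq> 0} \<and> (\<forall>w. f w \<noteq> 0 \<longrightarrow> length w = Suc n)}"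

definition basis :: "nat list \<Rightarrow> nat list \<Rightarrow> complex" where
  "basis w = (\<lambda>v. if v = w then 1 else 0)"

definition scal :: "complex \<Rightarrow> (nat list \<Rightarrow> complex) \<Rightarrow> (nat list \<Rightarrow> complex)" where
  "scal c f = (\<lambda>w. c * f w)"

text \<open>Linear extension of a monomial map  e_w \<mapsto> c w * e_(\<pi> w).\<close>
definition mono_ext :: "(nat list \<Rightarrow> complex) \<Rightarrow> (nat list \<Rightarrow> nat list)
    \<Rightarrow> (nat list \<Rightarrow> complex) \<Rightarrow> (nat list \<Rightarrow> complex)" where
  "mono_ext c \<pi> f = (\<lambda>v. \<Sum>w \<in> {w. f w \<noteq> 0 \<and> \<pi> w = v}. c w * f w)"

definition psi :: "complex \<Rightarrow> nat \<Rightarrow> (nat list \<Rightarrow> complex) \<Rightarrow> (nat list \<Rightarrow> complex)" where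
  "psi q i = mono_ext (\<lambda>w. q ^ (w ! i * w ! Suc i)) (\<lambda>w. w[i := w ! Suc i, Suc i := w ! i])"

definition sigma_coef :: "complex \<Rightarrow> complex \<Rightarrow> nat \<Rightarrow> complex" where
  "sigma_coef l q a = l ^ a * q ^ (a * (a - 1))"

definition sigma0 :: "complex \<Rightarrow> complex \<Rightarrow> (nat list \<Rightarrow> complex) \<Rightarrow> (nat list \<Rightarrow> complex)" where
  "sigma0 l q = mono_ext (\<lambda>w. sigma_coef l q (hd w)) id"

definition mu :: "nat \<Rightarrow> (nat list \<Rightarrow> complex) \<Rightarrow> (nat list \<Rightarrow> complex)" where
  "mu j = mono_ext (\<lambda>_. 1) (\<lambda>w. take j w @ [w ! j + w ! Suc j] @ drop (Suc (Suc j)) w)"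

fun Psi_block :: "complex \<Rightarrow> nat \<Rightarrow> (nat list \<Rightarrow> complex) \<Rightarrow> (nat list \<Rightarrow> complex)" where
  "Psi_block q 0 = id"
| "Psi_block q (Suc k) = Psi_block q k \<circ> psi q k"

definition cyc :: "complex \<Rightarrow> complex \<Rightarrow> nat \<Rightarrow> (nat list \<Rightarrow> complex) \<Rightarrow> (nat list \<Rightarrow> complex)" where
  "cyc l q n = sigma0 l q \<circ> Psi_block q n"

definition Tcyc :: "complex \<Rightarrow> complex \<Rightarrow> nat \<Rightarrow> (nat list \<Rightarrow> complex) \<Rightarrow> (nat list \<Rightarrow> complex)" where
  "Tcyc l q n = cyc l q n ^^ Suc n"

definition face :: "complex \<Rightarrow> complex \<Rightarrow> nat \<Rightarrow> nat \<Rightarrow> (nat list \<Rightarrow> complex) \<Rightarrow> (nat list \<Rightarrow> complex)" where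
  "face l q n j = (if j < n then mu j else mu 0 \<circ> cyc l q n)"

definition bdry :: "complex \<Rightarrow> complex \<Rightarrow> nat \<Rightarrow> (nat list \<Rightarrow> complex) \<Rightarrow> (nat list \<Rightarrow> complex)" where
  "bdry l q n f = (\<Sum>j\<le>n. scal ((-1) ^ j) (face l q n j f))"

text \<open>Connes' complex C^lambda_n = C_n / (1 - (-1)^n t_n), with C_n = coker(id - T_n):
  the kernel of  A^{(n+1)} \<rightarrow> C^lambda_n  is  im(id - T_n) + im(id - (-1)^n t_n).\<close>
definition relW :: "complex \<Rightarrow> complex \<Rightarrow> nat \<Rightarrow> (nat list \<Rightarrow> complex) set" where
  "relW l q n = {g. \<exists>f1\<in>tens n. \<exists>f2\<in>tens n.
      g = (f1 - Tcyc l q n f1) + (f2 - scal ((-1) ^ n) (cyc l q n f2))}"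

text \<open>Representatives of cycles and boundaries of Connes' complex (b : C^lambda_n \<rightarrow> C^lambda_{n-1}).\<close>
definition cycles :: "complex \<Rightarrow> complex \<Rightarrow> nat \<Rightarrow> (nat list \<Rightarrow> complex) set" where
  "cycles l q n = {f \<in> tens n. n = 0 \<or> bdry l q n f \<in> relW l q (n - 1)}"

definition bounds :: "complex \<Rightarrow> complex \<Rightarrow> nat \<Rightarrow> (nat list \<Rightarrow> complex) set" where
  "bounds l q n = {g. \<exists>h\<in>tens (Suc n). \<exists>r\<in>relW l q n. g = bdry l q (Suc n) h + r}"

text \<open>The classes of the elements of es form a basis of HC_n = cycles / bounds.\<close>
definition hc_basis :: "complex \<Rightarrow> complex \<Rightarrow> nat \<Rightarrow> (nat list \<Rightarrow> complex) list \<Rightarrow> bool" where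
  "hc_basis l q n es \<longleftrightarrow>
     set es \<subseteq> cycles l q n \<and>
     (\<forall>c. (\<Sum>i<length es. scal (c i) (es ! i)) \<in> bounds l q n \<longrightarrow> (\<forall>i<length es. c i = 0)) \<and>
     (\<forall>z\<in>cycles l q n. \<exists>c. z - (\<Sum>i<length es. scal (c i) (es ! i)) \<in> bounds l q n)"

end

(*
  Let s = split_hd split the first tensor factor, x^a (x) r |-> sum_{m<a} x^(a-m) (x) x^m (x) r,
  let b' be the bar differential and N = sum_k tau^k the norm of the signed cyclic operator
  tau = (-1)^n t.  Comparing faces gives the homotopy formula  b s + s b' = E + rho (1 - tau),
  where E = hd_deg multiplies by the exponent of the first factor and rho = resplit_hd is a
  second splitting operator.  As b' N = N b, applying it to N y for a cycle y of Connes' complex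
  shows that E N y is a boundary modulo the cyclic relations, and modulo the relations E N is
  multiplication by the total degree.  All operators involved preserve the total degree and T acts
  on each degree by a scalar, so one may divide by the degree: in positive degrees every cycle is
  homologous to its component along 1 (x) ... (x) 1.  In odd degrees this tensor is itself a
  relation, (1 - tau) 1 = 2 1, while in even degrees it has coefficient zero in every boundary and
  every relation.  In degree 0, b (x^u (x) x^v) = (1 - (lambda q^(u+v-1))^v) x^(u+v), so HC_0 is
  spanned by 1 and the x^a with lambda q^(a-1) = 1; if q is not a root of unity, such an a exists
  only when lambda = q^(-N), and then a = N + 1.
*)

theory Submission
  imports Defs
begin

section \<open>Finitely supported functions and linear operators\<close>

lemma sum_fun_apply: "(\<Sum>a\<in>A. f a) x = (\<Sum>a\<in>A. f a x)"
  by (induction A rule: infinite_finite_induct) auto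

lemma sum_lessThan_add:
  fixes g :: "nat \<Rightarrow> 'a::comm_monoid_add"
  shows "(\<Sum>i<a + b. g i) = (\<Sum>i<a. g i) + (\<Sum>i<b. g (a + i))"
  by (induction b) (simp_all add: add.assoc)

definition fin_supp :: "(nat list \<Rightarrow> complex) \<Rightarrow> bool" where
  "fin_supp f \<longleftrightarrow> finite {w. f w \<noteq> 0}"

definition supp :: "(nat list \<Rightarrow> complex) \<Rightarrow> nat list set" where
  "supp f = {w. f w \<noteq> 0}"

lemma scal_apply: "scal c f w = c * f w" by (simp add: scal_def)
lemma basis_apply: "basis w v = (if v = w then 1 else 0)" by (simp add: basis_def)

lemma scal_add: "scal c (f + g) = scal c f + scal c g" by (auto simp: scal_apply fun_eq_iff algebra_simps)
lemma scal_diff: "scal c (f - g) = scal c f - scal c g" by (auto simp: scal_apply fun_eq_iff algebra_simps)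
lemma scal_scal: "scal a (scal b f) = scal (a * b) f" by (auto simp: scal_apply fun_eq_iff)
lemma scal_1[simp]: "scal 1 f = f" by (auto simp: scal_apply fun_eq_iff)
lemma scal_0[simp]: "scal 0 f = 0" by (auto simp: scal_apply fun_eq_iff)
lemma scal_zero[simp]: "scal c 0 = 0" by (auto simp: scal_apply fun_eq_iff)
lemma scal_minus_one: "scal (-1) f = - f" by (auto simp: scal_apply fun_eq_iff)
lemma scal_uminus_left: "scal (- c) f = - scal c f" by (auto simp: scal_apply fun_eq_iff)
lemma scal_add_left: "scal (a + b) f = scal a f + scal b f" by (auto simp: scal_apply fun_eq_iff algebra_simps)
lemma scal_sum: "scal c (\<Sum>a\<in>A. f a) = (\<Sum>a\<in>A. scal c (f a))"
  by (rule ext) (simp add: scal_apply sum_fun_apply sum_distrib_left)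
lemma scal_sum_left: "scal (\<Sum>a\<in>A. f a) g = (\<Sum>a\<in>A. scal (f a) g)"
  by (rule ext) (simp add: scal_apply sum_fun_apply sum_distrib_right)

lemma fin_supp_0[simp]: "fin_supp 0" by (simp add: fin_supp_def)
lemma fin_supp_basis[simp]: "fin_supp (basis w)"
proof -
  have "{v. basis w v \<noteq> 0} \<subseteq> {w}" by (auto simp: basis_def)
  then show ?thesis unfolding fin_supp_def using finite_subset by blast
qed

lemma fin_supp_add[simp]: "fin_supp f \<Longrightarrow> fin_supp g \<Longrightarrow> fin_supp (f + g)"
proof -
  assume "fin_supp f" "fin_supp g"
  have "{w. (f + g) w \<noteq> 0} \<subseteq> {w. f w \<noteq> 0} \<union> {w. g w \<noteq> 0}" by auto
  then show ?thesis using \<open>fin_supp f\<close> \<open>fin_supp g\<close> unfolding fin_supp_def using finite_subset by blast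
qed

lemma fin_supp_scal[simp]: "fin_supp f \<Longrightarrow> fin_supp (scal c f)"
proof -
  assume "fin_supp f"
  have "{w. scal c f w \<noteq> 0} \<subseteq> {w. f w \<noteq> 0}" by (auto simp: scal_apply)
  then show ?thesis using \<open>fin_supp f\<close> unfolding fin_supp_def using finite_subset by blast
qed

lemma fin_supp_uminus[simp]: "fin_supp f \<Longrightarrow> fin_supp (- f)" by (simp add: fin_supp_def)
lemma fin_supp_diff[simp]: "fin_supp f \<Longrightarrow> fin_supp g \<Longrightarrow> fin_supp (f - g)"
  using fin_supp_add[of f "- g"] by simp
lemma fin_supp_sum[simp]: "(\<And>a. a \<in> A \<Longrightarrow> fin_supp (f a)) \<Longrightarrow> fin_supp (\<Sum>a\<in>A. f a)"
  by (induction A rule: infinite_finite_induct) auto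

lemma basis_expansion: "fin_supp f \<Longrightarrow> f = (\<Sum>w\<in>supp f. scal (f w) (basis w))"
proof
  fix v assume "fin_supp f"
  have fin: "finite (supp f)" using \<open>fin_supp f\<close> by (simp add: fin_supp_def supp_def)
  have "(\<Sum>w\<in>supp f. scal (f w) (basis w)) v = (\<Sum>w\<in>supp f. f w * (if v = w then 1 else 0))"
    by (simp add: scal_apply sum_fun_apply basis_def)
  also have "\<dots> = (if v \<in> supp f then f v else 0)"
    using fin by (simp add: if_distrib sum.delta cong: if_cong)
  also have "\<dots> = f v" by (auto simp: supp_def)
  finally show "f v = (\<Sum>w\<in>supp f. scal (f w) (basis w)) v" by simp
qed

text \<open>Linearity is only asked for on finitely supported arguments: \<open>mono_ext\<close> sums over
  the support, so it is not additive on functions of infinite support.\<close>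

definition linop :: "((nat list \<Rightarrow> complex) \<Rightarrow> (nat list \<Rightarrow> complex)) \<Rightarrow> bool" where
  "linop F \<longleftrightarrow> (\<forall>f g. fin_supp f \<longrightarrow> fin_supp g \<longrightarrow> F (f + g) = F f + F g)
     \<and> (\<forall>c f. fin_supp f \<longrightarrow> F (scal c f) = scal c (F f)) \<and> (\<forall>f. fin_supp f \<longrightarrow> fin_supp (F f))"

lemma
  assumes "linop F"
  shows linop_add: "fin_supp f \<Longrightarrow> fin_supp g \<Longrightarrow> F (f + g) = F f + F g"
    and linop_scal: "fin_supp f \<Longrightarrow> F (scal c f) = scal c (F f)"
    and linop_fin_supp: "fin_supp f \<Longrightarrow> fin_supp (F f)"
  using assms unfolding linop_def by auto

lemma linop_zero: "linop F \<Longrightarrow> F 0 = 0"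
  using linop_scal[of F 0 0] by simp

lemma linop_uminus: "linop F \<Longrightarrow> fin_supp f \<Longrightarrow> F (- f) = - F f"
  using linop_scal[of F f "-1"] by (simp add: scal_minus_one)

lemma linop_diff: "linop F \<Longrightarrow> fin_supp f \<Longrightarrow> fin_supp g \<Longrightarrow> F (f - g) = F f - F g"
  using linop_add[of F f "- g"] linop_uminus[of F g] by simp

lemma linop_sum:
  "linop F \<Longrightarrow> (\<And>a. a \<in> A \<Longrightarrow> fin_supp (f a)) \<Longrightarrow> F (\<Sum>a\<in>A. f a) = (\<Sum>a\<in>A. F (f a))"
proof (induction A rule: infinite_finite_induct)
  case (insert x A)
  have "F (sum f (insert x A)) = F (f x + sum f A)" by (simp only: sum.insert[OF insert.hyps])
  also have "\<dots> = F (f x) + F (sum f A)"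
    by (rule linop_add[OF insert.prems(1)]) (use insert.prems in auto)
  also have "\<dots> = (\<Sum>a\<in>insert x A. F (f a))"
    using insert.IH insert.prems by (simp only: sum.insert[OF insert.hyps]) simp
  finally show ?case .
qed (metis linop_zero sum.infinite, metis linop_zero sum.empty)

lemma linop_expansion: "linop F \<Longrightarrow> fin_supp f \<Longrightarrow> F f = (\<Sum>w\<in>supp f. scal (f w) (F (basis w)))"
proof -
  assume F: "linop F" and f: "fin_supp f"
  have "F f = F (\<Sum>w\<in>supp f. scal (f w) (basis w))" using basis_expansion[OF f] by simp
  also have "\<dots> = (\<Sum>w\<in>supp f. F (scal (f w) (basis w)))" by (rule linop_sum[OF F]) simp
  also have "\<dots> = (\<Sum>w\<in>supp f. scal (f w) (F (basis w)))"
    by (intro sum.cong refl linop_scal[OF F]) simp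
  finally show ?thesis .
qed

lemma linop_eqI:
  "linop F \<Longrightarrow> linop G \<Longrightarrow> fin_supp f \<Longrightarrow> (\<And>w. w \<in> supp f \<Longrightarrow> F (basis w) = G (basis w)) \<Longrightarrow> F f = G f"
  using linop_expansion[of F f] linop_expansion[of G f] by (auto intro: sum.cong)

lemma linop_id[simp]: "linop id" and linop_ident[simp]: "linop (\<lambda>f. f)" by (auto simp: linop_def)

lemma linop_comp: "linop F \<Longrightarrow> linop G \<Longrightarrow> linop (F \<circ> G)"
  by (auto simp: linop_def)
lemma linop_compose: "linop F \<Longrightarrow> linop G \<Longrightarrow> linop (\<lambda>f. F (G f))"
  by (auto simp: linop_def)
lemma linop_compose_add: "linop F \<Longrightarrow> linop G \<Longrightarrow> linop (\<lambda>f. F f + G f)"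
  by (auto simp: linop_def scal_add)
lemma linop_compose_sub: "linop F \<Longrightarrow> linop G \<Longrightarrow> linop (\<lambda>f. F f - G f)"
  by (auto simp: linop_def scal_diff)
lemma linop_compose_scal: "linop F \<Longrightarrow> linop (\<lambda>f. scal c (F f))"
  by (auto simp: linop_def scal_add scal_scal mult.commute)
lemma linop_compose_sum: "(\<And>a. a \<in> A \<Longrightarrow> linop (F a)) \<Longrightarrow> linop (\<lambda>f. \<Sum>a\<in>A. F a f)"
proof (induction A rule: infinite_finite_induct)
  case (insert x A)
  have "linop (\<lambda>f. F x f + (\<Sum>a\<in>A. F a f))" using insert by (intro linop_compose_add) auto
  moreover have "(\<lambda>f. \<Sum>a\<in>insert x A. F a f) = (\<lambda>f. F x f + (\<Sum>a\<in>A. F a f))"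
    by (simp only: sum.insert[OF insert.hyps])
  ultimately show ?case by (simp only:)
qed (auto simp: linop_def fun_eq_iff fin_supp_def scal_apply)
lemma linop_funpow: "linop F \<Longrightarrow> linop (F ^^ k)"
  by (induction k) (auto intro: linop_comp)

definition kernel_op :: "(nat list \<Rightarrow> nat list \<Rightarrow> complex) \<Rightarrow> (nat list \<Rightarrow> complex) \<Rightarrow> (nat list \<Rightarrow> complex)" where
  "kernel_op K f = (\<lambda>v. \<Sum>w\<in>supp f. f w * K w v)"

lemma kernel_op_superset:
  assumes "finite A" "supp f \<subseteq> A"
  shows "kernel_op K f v = (\<Sum>w\<in>A. f w * K w v)"
  unfolding kernel_op_def using assms by (intro sum.mono_neutral_left) (auto simp: supp_def)

lemma linop_kernel_op:
  assumes "\<And>w. fin_supp (K w)"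
  shows "linop (kernel_op K)"
  unfolding linop_def
proof (intro conjI allI impI)
  fix f g assume "fin_supp f" "fin_supp g"
  then have fin: "finite (supp f \<union> supp g)" by (simp add: fin_supp_def supp_def)
  have "supp f \<subseteq> supp f \<union> supp g" "supp g \<subseteq> supp f \<union> supp g" "supp (f + g) \<subseteq> supp f \<union> supp g"
    by (auto simp: supp_def)
  then show "kernel_op K (f + g) = kernel_op K f + kernel_op K g"
    by (auto simp: kernel_op_superset[OF fin] distrib_right sum.distrib)
next
  fix c f assume "fin_supp f"
  then have fin: "finite (supp f)" by (simp add: fin_supp_def supp_def)
  have "supp (scal c f) \<subseteq> supp f" by (auto simp: supp_def scal_apply)
  then show "kernel_op K (scal c f) = scal c (kernel_op K f)"
    by (auto simp: kernel_op_superset[OF fin] sum_distrib_left mult.assoc scal_apply)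
next
  fix f assume "fin_supp f"
  then have fin: "finite (supp f)" by (simp add: fin_supp_def supp_def)
  have "{v. kernel_op K f v \<noteq> 0} \<subseteq> (\<Union>w\<in>supp f. {v. K w v \<noteq> 0})"
    by (auto simp: kernel_op_def elim!: sum.not_neutral_contains_not_neutral)
  moreover have "finite (\<Union>w\<in>supp f. {v. K w v \<noteq> 0})" using fin assms by (auto simp: fin_supp_def)
  ultimately show "fin_supp (kernel_op K f)" unfolding fin_supp_def using finite_subset by blast
qed

lemma kernel_op_basis: "kernel_op K (basis w) = K w"
proof
  fix v
  have "supp (basis w) = {w}" by (auto simp: supp_def basis_def)
  then show "kernel_op K (basis w) v = K w v" by (simp add: kernel_op_def basis_def)
qed

lemma mono_ext_eq_kernel_op:
  "fin_supp f \<Longrightarrow> mono_ext c \<pi> f = kernel_op (\<lambda>w. scal (c w) (basis (\<pi> w))) f"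
proof
  fix v assume "fin_supp f"
  then have fin: "finite (supp f)" by (simp add: fin_supp_def supp_def)
  have "mono_ext c \<pi> f v = (\<Sum>w\<in>{w\<in>supp f. \<pi> w = v}. c w * f w)"
    by (simp add: mono_ext_def supp_def)
  also have "\<dots> = (\<Sum>w\<in>supp f. if \<pi> w = v then c w * f w else 0)"
    using fin by (simp add: sum.inter_filter)
  also have "\<dots> = kernel_op (\<lambda>w. scal (c w) (basis (\<pi> w))) f v"
    by (auto simp: kernel_op_def basis_def scal_def intro!: sum.cong)
  finally show "mono_ext c \<pi> f v = kernel_op (\<lambda>w. scal (c w) (basis (\<pi> w))) f v" .
qed

lemma scal_basis_nonzero: "scal c (basis u) v \<noteq> 0 \<Longrightarrow> v = u"
  by (auto simp: scal_apply basis_def split: if_splits)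

lemma linop_mono_ext: "linop (mono_ext c \<pi>)"
proof -
  have "linop (kernel_op (\<lambda>w. scal (c w) (basis (\<pi> w))))" by (rule linop_kernel_op) simp
  then show ?thesis unfolding linop_def by (simp add: mono_ext_eq_kernel_op)
qed

lemma mono_ext_basis: "mono_ext c \<pi> (basis w) = scal (c w) (basis (\<pi> w))"
  by (simp add: mono_ext_eq_kernel_op kernel_op_basis scal_def)

definition diag_op :: "(nat list \<Rightarrow> complex) \<Rightarrow> (nat list \<Rightarrow> complex) \<Rightarrow> (nat list \<Rightarrow> complex)" where
  "diag_op g f = (\<lambda>w. g w * f w)"

lemma linop_diag_op[simp]: "linop (diag_op g)"
proof -
  have "fin_supp (diag_op g f)" if "fin_supp f" for f
  proof -
    have "{w. diag_op g f w \<noteq> 0} \<subseteq> {w. f w \<noteq> 0}" by (auto simp: diag_op_def)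
    then show ?thesis using that unfolding fin_supp_def using finite_subset by blast
  qed
  then show ?thesis unfolding linop_def by (auto simp: diag_op_def fun_eq_iff scal_apply algebra_simps)
qed

lemma diag_op_basis: "diag_op g (basis w) = scal (g w) (basis w)"
  by (auto simp: diag_op_def basis_def scal_apply fun_eq_iff)

lemma tens_iff: "f \<in> tens n \<longleftrightarrow> fin_supp f \<and> (\<forall>w. f w \<noteq> 0 \<longrightarrow> length w = Suc n)"
  by (simp add: tens_def fin_supp_def)

lemma tens_fin_supp: "f \<in> tens n \<Longrightarrow> fin_supp f" by (simp add: tens_iff)
lemma tens_len: "f \<in> tens n \<Longrightarrow> w \<in> supp f \<Longrightarrow> length w = Suc n"
  by (simp add: tens_iff supp_def)

lemma tens_0[simp]: "0 \<in> tens n" by (simp add: tens_iff)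
lemma tens_add[simp]: "f \<in> tens n \<Longrightarrow> g \<in> tens n \<Longrightarrow> f + g \<in> tens n"
proof -
  assume a: "f \<in> tens n" "g \<in> tens n"
  have "\<And>w. (f + g) w \<noteq> 0 \<Longrightarrow> length w = Suc n"
  proof -
    fix w assume "(f + g) w \<noteq> 0"
    then have "f w \<noteq> 0 \<or> g w \<noteq> 0" by auto
    then show "length w = Suc n" using a by (auto simp: tens_iff)
  qed
  then show ?thesis using a by (simp add: tens_iff)
qed
lemma tens_scal[simp]: "f \<in> tens n \<Longrightarrow> scal c f \<in> tens n"
  by (auto simp: tens_iff scal_apply)
lemma tens_uminus[simp]: "f \<in> tens n \<Longrightarrow> - f \<in> tens n"
  by (auto simp: tens_iff)
lemma tens_diff[simp]: "f \<in> tens n \<Longrightarrow> g \<in> tens n \<Longrightarrow> f - g \<in> tens n"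
  using tens_add[of f n "- g"] by simp
lemma tens_sum[simp]: "(\<And>a. a \<in> A \<Longrightarrow> f a \<in> tens n) \<Longrightarrow> (\<Sum>a\<in>A. f a) \<in> tens n"
  by (induction A rule: infinite_finite_induct) auto
lemma tens_basis[simp]: "length w = Suc n \<Longrightarrow> basis w \<in> tens n"
  by (auto simp: tens_iff basis_apply)

lemma linop_maps_tens:
  assumes "linop F" "\<And>w. length w = Suc n \<Longrightarrow> F (basis w) \<in> tens m" "f \<in> tens n"
  shows "F f \<in> tens m"
proof -
  have "F f = (\<Sum>w\<in>supp f. scal (f w) (F (basis w)))" by (rule linop_expansion[OF assms(1) tens_fin_supp[OF assms(3)]])
  also have "\<dots> \<in> tens m" using assms(2) tens_len[OF assms(3)] by (intro tens_sum tens_scal) auto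
  finally show ?thesis .
qed

lemma linop_eq_on_tens:
  assumes "linop F" "linop G" "f \<in> tens n" "\<And>w. length w = Suc n \<Longrightarrow> F (basis w) = G (basis w)"
  shows "F f = G f"
  using assms(4) tens_len[OF assms(3)] by (intro linop_eqI[OF assms(1,2) tens_fin_supp[OF assms(3)]]) auto

lemma linop_apply_eq_0:
  assumes F: "linop F" and f: "f \<in> tens n" and "\<And>w. length w = Suc n \<Longrightarrow> F (basis w) x = 0"
  shows "F f x = 0"
proof -
  have "F f x = (\<Sum>w\<in>supp f. f w * F (basis w) x)"
    by (simp add: linop_expansion[OF F tens_fin_supp[OF f]] sum_fun_apply scal_apply)
  also have "\<dots> = 0" using tens_len[OF f] assms(3) by (intro sum.neutral) auto
  finally show ?thesis .
qed

lemma diag_op_tens[simp]: "f \<in> tens n \<Longrightarrow> diag_op g f \<in> tens n"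
  using linop_fin_supp[OF linop_diag_op tens_fin_supp] by (auto simp: tens_iff diag_op_def)

definition merge_at :: "nat \<Rightarrow> nat list \<Rightarrow> nat list" where
  "merge_at j w = take j w @ [w ! j + w ! Suc j] @ drop (Suc (Suc j)) w"

definition rotr :: "nat list \<Rightarrow> nat list" where
  "rotr w = last w # butlast w"

lemma merge_at_Cons[simp]: "merge_at (Suc j) (a # xs) = a # merge_at j xs"
  by (simp add: merge_at_def)

lemma merge_at_append: "Suc j < length xs \<Longrightarrow> merge_at j (xs @ ys) = merge_at j xs @ ys"
  by (simp add: merge_at_def nth_append)

lemma length_merge_at: "Suc j < length w \<Longrightarrow> length (merge_at j w) = length w - 1"
  by (simp add: merge_at_def)

lemma sum_list_merge_at: "Suc j < length w \<Longrightarrow> sum_list (merge_at j w) = sum_list w"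
proof -
  assume "Suc j < length w"
  then have "w = take j w @ w ! j # w ! Suc j # drop (Suc (Suc j)) w"
    by (simp add: Cons_nth_drop_Suc)
  then have "sum_list w = sum_list (take j w @ w ! j # w ! Suc j # drop (Suc (Suc j)) w)"
    by simp
  then show ?thesis by (simp add: merge_at_def)
qed

lemma merge_at_0_Cons2[simp]: "merge_at 0 (a # b # xs) = (a + b) # xs"
  by (simp add: merge_at_def)

lemma rotr_snoc[simp]: "rotr (xs @ [a]) = a # xs"
  by (simp add: rotr_def)

lemma sum_list_butlast_last: "w \<noteq> [] \<Longrightarrow> sum_list w = sum_list (butlast w) + last w"
  by (metis append_butlast_last_id sum_list_append sum_list.Cons sum_list.Nil add_0_right)

lemma length_rotr[simp]: "w \<noteq> [] \<Longrightarrow> length (rotr w) = length w"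
  by (cases w rule: rev_cases) (auto simp: rotr_def)

lemma sum_list_rotr[simp]: "w \<noteq> [] \<Longrightarrow> sum_list (rotr w) = sum_list w"
  by (cases w rule: rev_cases) (auto simp: rotr_def)

lemma length_rotr_pow[simp]: "w \<noteq> [] \<Longrightarrow> length ((rotr ^^ i) w) = length w"
  by (induction i) (auto, metis length_0_conv length_rotr)

lemma sum_list_rotr_pow[simp]: "w \<noteq> [] \<Longrightarrow> sum_list ((rotr ^^ i) w) = sum_list w"
proof (induction i)
  case (Suc i)
  have "(rotr ^^ i) w \<noteq> []" using Suc.prems length_rotr_pow[of w i] by (metis length_0_conv)
  then show ?case using Suc by simp
qed simp

lemma rotr_pow: "i \<le> length w \<Longrightarrow> (rotr ^^ i) w = drop (length w - i) w @ take (length w - i) w"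
proof (induction i)
  case 0 then show ?case by simp
next
  case (Suc i)
  define d where "d = length w - Suc i"
  have d1: "d < length w" "length w - i = Suc d" using Suc.prems by (auto simp: d_def)
  have tk: "take (Suc d) w = take d w @ [w ! d]"
    by (rule take_Suc_conv_app_nth) (rule d1(1))
  have dr: "drop d w = w ! d # drop (Suc d) w"
    by (rule Cons_nth_drop_Suc[symmetric]) (rule d1(1))
  have "(rotr ^^ Suc i) w = rotr (drop (Suc d) w @ take (Suc d) w)" using Suc by (simp add: d1(2))
  also have "\<dots> = drop d w @ take d w"
    unfolding rotr_def tk dr by (simp add: butlast_append)
  finally show ?case by (simp add: d_def)
qed

lemma last_rotr_pow: "i < length w \<Longrightarrow> last ((rotr ^^ i) w) = w ! (length w - Suc i)"
proof -
  assume i: "i < length w"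
  define d where "d = length w - Suc i"
  have d1: "d < length w" "length w - i = Suc d" using i by (auto simp: d_def)
  have tk: "take (Suc d) w = take d w @ [w ! d]"
    by (rule take_Suc_conv_app_nth) (rule d1(1))
  have "(rotr ^^ i) w = drop (Suc d) w @ take (Suc d) w" using i by (simp add: rotr_pow d1(2))
  then have "last ((rotr ^^ i) w) = w ! d" by (simp add: tk)
  then show ?thesis by (simp add: d_def)
qed

lemma hd_rotr_pow: "0 < i \<Longrightarrow> i \<le> length w \<Longrightarrow> hd ((rotr ^^ i) w) = w ! (length w - i)"
  by (auto simp: rotr_pow hd_append hd_drop_conv_nth)

lemma rotr_pow_len: "(rotr ^^ length w) w = w"
  by (simp add: rotr_pow)

lemma sum_hd_rotr_pow:
  assumes "length w = Suc n"
  shows "(\<Sum>k\<le>n. hd ((rotr ^^ k) w)) = sum_list w"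
proof -
  have "(\<Sum>k\<le>n. hd ((rotr ^^ k) w)) = hd w + (\<Sum>k<n. hd ((rotr ^^ Suc k) w))"
    by (simp add: sum.atMost_shift del: funpow.simps)
  also have "(\<Sum>k<n. hd ((rotr ^^ Suc k) w)) = (\<Sum>k<n. w ! Suc (n - Suc k))"
    using assms by (intro sum.cong refl) (simp add: hd_rotr_pow Suc_diff_Suc del: funpow.simps)
  also have "\<dots> = (\<Sum>k<n. w ! Suc k)" by (rule sum.nat_diff_reindex)
  also have "hd w + \<dots> = sum_list w"
    using assms by (cases w) (simp_all add: sum_list_sum_nth atLeast0LessThan sum.lessThan_Suc_shift
        del: sum.lessThan_Suc)
  finally show ?thesis .
qed

abbreviation zero_word :: "nat \<Rightarrow> nat list" where
  "zero_word k \<equiv> replicate k 0"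

lemma sum_list_zero_word[simp]: "sum_list (zero_word k) = 0"
  by (simp add: sum_list_replicate)

lemma zero_word_if_sum_list_0: "length w = k \<Longrightarrow> sum_list w = 0 \<Longrightarrow> w = zero_word k"
  by (induction w arbitrary: k) auto

text \<open>\<open>t\<^sub>n\<close> moves the last factor \<open>x\<^sup>a\<close> of a basis tensor of total degree \<open>S\<close> to the
  front; the braidings contribute \<open>q\<^bsup>a(S-a)\<^esup>\<close> and \<open>\<sigma>\<close> contributes \<open>\<lambda>\<^sup>a q\<^bsup>a(a-1)\<^esup>\<close>.
  Since the exponents of the \<open>n+1\<close> rotations add up to \<open>S\<close>, \<open>T\<^sub>n\<close> acts by a scalar.\<close>

definition cyc_coeff :: "complex \<Rightarrow> complex \<Rightarrow> nat list \<Rightarrow> complex" where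
  "cyc_coeff l q w = (l * q ^ (sum_list w - 1)) ^ last w"

definition Tcyc_coeff :: "complex \<Rightarrow> complex \<Rightarrow> nat \<Rightarrow> complex" where
  "Tcyc_coeff l q S = (l * q ^ (S - 1)) ^ S"

lemma cyc_coeff_snoc: "cyc_coeff l q (xs @ [a]) = (l * q ^ (sum_list xs + a - 1)) ^ a"
  by (simp add: cyc_coeff_def)

lemma linop_psi[simp]: "linop (psi q i)" unfolding psi_def by (rule linop_mono_ext)
lemma linop_sigma0[simp]: "linop (sigma0 l q)" unfolding sigma0_def by (rule linop_mono_ext)
lemma linop_mu[simp]: "linop (mu j)" unfolding mu_def by (rule linop_mono_ext)
lemma linop_Psi_block[simp]: "linop (Psi_block q k)"
  by (induction k) (auto intro: linop_comp linop_compose)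
lemma linop_cyc[simp]: "linop (cyc l q n)" unfolding cyc_def by (auto intro: linop_comp)
lemma linop_Tcyc[simp]: "linop (Tcyc l q n)" unfolding Tcyc_def by (intro linop_funpow linop_cyc)
lemma linop_face[simp]: "linop (face l q n j)" unfolding face_def by (auto intro: linop_comp)
lemma linop_bdry[simp]: "linop (bdry l q n)"
  unfolding bdry_def by (intro linop_compose_sum linop_compose_scal) simp

lemma mu_basis: "mu j (basis w) = basis (merge_at j w)"
  unfolding mu_def merge_at_def by (simp add: mono_ext_basis)

lemma psi_basis: "psi q i (basis w) = scal (q ^ (w ! i * w ! Suc i)) (basis (w[i := w ! Suc i, Suc i := w ! i]))"
  unfolding psi_def by (simp add: mono_ext_basis)

lemma sigma0_basis: "sigma0 l q (basis w) = scal (sigma_coef l q (hd w)) (basis w)"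
  unfolding sigma0_def by (simp add: mono_ext_basis)

lemma swap_adjacent:
  assumes "Suc k < length w"
  shows "w[k := w ! Suc k, Suc k := w ! k] ! k = w ! Suc k"
    and "take k (w[k := w ! Suc k, Suc k := w ! k]) = take k w"
    and "drop (Suc k) (w[k := w ! Suc k, Suc k := w ! k]) = w ! k # drop (Suc (Suc k)) w"
  using assms by (simp_all add: nth_list_update drop_update_swap Cons_nth_drop_Suc[symmetric])

lemma Psi_block_basis:
  "k < length w \<Longrightarrow> Psi_block q k (basis w) =
     scal (q ^ (w ! k * sum_list (take k w))) (basis (w ! k # take k w @ drop (Suc k) w))"
proof (induction k arbitrary: w)
  case 0
  then show ?case by (cases w) (auto simp: scal_def)
next
  case (Suc k)
  define w' where "w' = w[k := w ! Suc k, Suc k := w ! k]"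
  have "Psi_block q (Suc k) (basis w) = scal (q ^ (w ! k * w ! Suc k)) (Psi_block q k (basis w'))"
    by (simp add: psi_basis w'_def linop_scal[OF linop_Psi_block])
  also have "\<dots> = scal (q ^ (w ! k * w ! Suc k)) (scal (q ^ (w ! Suc k * sum_list (take k w)))
      (basis (w ! Suc k # take k w @ w ! k # drop (Suc (Suc k)) w)))"
    using Suc.IH[of w'] Suc.prems by (simp add: w'_def swap_adjacent)
  also have "\<dots> = scal (q ^ (w ! Suc k * sum_list (take (Suc k) w)))
      (basis (w ! Suc k # take (Suc k) w @ drop (Suc (Suc k)) w))"
    using Suc.prems by (simp add: scal_scal take_Suc_conv_app_nth algebra_simps flip: power_add)
  finally show ?case .
qed

lemma sigma_coef_mult_power: "sigma_coef l q a * q ^ (a * B) = (l * q ^ (B + a - 1)) ^ a"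
proof (cases a)
  case 0 then show ?thesis by (simp add: sigma_coef_def)
next
  case (Suc a')
  have "sigma_coef l q a * q ^ (a * B) = l ^ a * q ^ (a * a' + a * B)"
    by (simp add: sigma_coef_def Suc power_add)
  also have "a * a' + a * B = (B + a - 1) * a" by (simp add: Suc algebra_simps)
  also have "l ^ a * q ^ ((B + a - 1) * a) = (l * q ^ (B + a - 1)) ^ a"
    by (simp only: power_mult_distrib power_mult)
  finally show ?thesis .
qed

lemma cyc_basis:
  assumes "length w = Suc n"
  shows "cyc l q n (basis w) = scal (cyc_coeff l q w) (basis (rotr w))"
proof -
  have ne: "w \<noteq> []" using assms by auto
  have "Psi_block q n (basis w) = scal (q ^ (w ! n * sum_list (take n w))) (basis (w ! n # take n w @ drop (Suc n) w))"
    using assms by (simp add: Psi_block_basis)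
  also have "w ! n = last w" using assms ne by (simp add: last_conv_nth)
  also have "take n w = butlast w" using assms by (simp add: butlast_conv_take)
  also have "drop (Suc n) w = []" using assms by simp
  finally have P: "Psi_block q n (basis w) = scal (q ^ (last w * sum_list (butlast w))) (basis (rotr w))"
    by (simp add: rotr_def)
  have "cyc l q n (basis w) = sigma0 l q (scal (q ^ (last w * sum_list (butlast w))) (basis (rotr w)))"
    by (simp add: cyc_def P)
  also have "\<dots> = scal (q ^ (last w * sum_list (butlast w)) * sigma_coef l q (last w)) (basis (rotr w))"
    by (simp add: linop_scal[OF linop_sigma0] sigma0_basis scal_scal rotr_def)
  also have "q ^ (last w * sum_list (butlast w)) * sigma_coef l q (last w) = cyc_coeff l q w"
    using sigma_coef_mult_power[of l q "last w" "sum_list (butlast w)"] sum_list_butlast_last[OF ne]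
    by (simp add: cyc_coeff_def mult.commute add.commute)
  finally show ?thesis .
qed

lemma cyc_pow_basis:
  assumes "length w = Suc n"
  shows "(cyc l q n ^^ k) (basis w) = scal (\<Prod>i<k. cyc_coeff l q ((rotr ^^ i) w)) (basis ((rotr ^^ k) w))"
proof (induction k)
  case 0 then show ?case by simp
next
  case (Suc k)
  have len: "length ((rotr ^^ k) w) = Suc n"
    using assms length_rotr_pow[of w k] by (metis list.size(3) nat.simps(3))
  have "(cyc l q n ^^ Suc k) (basis w) = cyc l q n (scal (\<Prod>i<k. cyc_coeff l q ((rotr ^^ i) w)) (basis ((rotr ^^ k) w)))"
    using Suc by simp
  also have "\<dots> = scal (\<Prod>i<k. cyc_coeff l q ((rotr ^^ i) w)) (scal (cyc_coeff l q ((rotr ^^ k) w)) (basis ((rotr ^^ Suc k) w)))"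
    using len by (simp add: linop_scal[OF linop_cyc] cyc_basis)
  finally show ?case by (simp add: scal_scal)
qed

lemma Tcyc_basis:
  assumes "length w = Suc n"
  shows "Tcyc l q n (basis w) = scal (Tcyc_coeff l q (sum_list w)) (basis w)"
proof -
  have ne0: "w \<noteq> []" using assms by auto
  have ne: "\<And>i. (rotr ^^ i) w \<noteq> []" using assms ne0 by (metis length_rotr_pow list.size(3) nat.simps(3))
  have "(\<Prod>i<Suc n. cyc_coeff l q ((rotr ^^ i) w)) = (\<Prod>i<Suc n. (l * q ^ (sum_list w - 1)) ^ last ((rotr ^^ i) w))"
    using ne0 by (simp add: cyc_coeff_def)
  also have "\<dots> = (l * q ^ (sum_list w - 1)) ^ (\<Sum>i<Suc n. last ((rotr ^^ i) w))"
    by (rule power_sum[symmetric])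
  also have "(\<Sum>i<Suc n. last ((rotr ^^ i) w)) = (\<Sum>i<Suc n. w ! (Suc n - Suc i))"
    using assms by (intro sum.cong refl) (simp add: last_rotr_pow)
  also have "\<dots> = (\<Sum>i<Suc n. w ! i)" by (rule sum.nat_diff_reindex)
  also have "\<dots> = sum_list w" using assms by (simp add: sum_list_sum_nth atLeast0LessThan)
  finally have P: "(\<Prod>i<Suc n. cyc_coeff l q ((rotr ^^ i) w)) = Tcyc_coeff l q (sum_list w)" by (simp add: Tcyc_coeff_def)
  have "Tcyc l q n (basis w) = scal (\<Prod>i<Suc n. cyc_coeff l q ((rotr ^^ i) w)) (basis ((rotr ^^ Suc n) w))"
    unfolding Tcyc_def by (rule cyc_pow_basis[OF assms])
  also have "(rotr ^^ Suc n) w = w" using rotr_pow_len[of w] assms by simp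
  finally show ?thesis using P by simp
qed

lemma cyc_tens[simp]: "f \<in> tens n \<Longrightarrow> cyc l q n f \<in> tens n"
proof (rule linop_maps_tens[OF linop_cyc])
  fix w :: "nat list" assume a: "length w = Suc n"
  then have "w \<noteq> []" by auto
  then have "length (rotr w) = Suc n" using a by simp
  then show "cyc l q n (basis w) \<in> tens n" using a by (simp add: cyc_basis)
qed

lemma cyc_pow_tens[simp]: "f \<in> tens n \<Longrightarrow> (cyc l q n ^^ k) f \<in> tens n"
  by (induction k) auto

lemma Tcyc_tens[simp]: "f \<in> tens n \<Longrightarrow> Tcyc l q n f \<in> tens n"
  by (simp add: Tcyc_def del: funpow.simps)

lemma mu_tens[simp]: "j < Suc m \<Longrightarrow> f \<in> tens (Suc m) \<Longrightarrow> mu j f \<in> tens m"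
  by (rule linop_maps_tens[OF linop_mu]) (auto simp: mu_basis length_merge_at)

lemma face_tens[simp]: "f \<in> tens (Suc m) \<Longrightarrow> face l q (Suc m) j f \<in> tens m"
  by (auto simp: face_def)

section \<open>The signed cyclic operator, its norm and the bar differential\<close>

definition tau :: "complex \<Rightarrow> complex \<Rightarrow> nat \<Rightarrow> (nat list \<Rightarrow> complex) \<Rightarrow> (nat list \<Rightarrow> complex)" where
  "tau l q n f = scal ((-1) ^ n) (cyc l q n f)"

definition cyc_norm :: "complex \<Rightarrow> complex \<Rightarrow> nat \<Rightarrow> (nat list \<Rightarrow> complex) \<Rightarrow> (nat list \<Rightarrow> complex)" where
  "cyc_norm l q n f = (\<Sum>k\<le>n. (tau l q n ^^ k) f)"

definition sface :: "complex \<Rightarrow> complex \<Rightarrow> nat \<Rightarrow> nat \<Rightarrow> (nat list \<Rightarrow> complex) \<Rightarrow> (nat list \<Rightarrow> complex)" where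
  "sface l q n i f = scal ((-1) ^ i) (face l q n i f)"

definition bar_bdry :: "complex \<Rightarrow> complex \<Rightarrow> nat \<Rightarrow> (nat list \<Rightarrow> complex) \<Rightarrow> (nat list \<Rightarrow> complex)" where
  "bar_bdry l q n f = (\<Sum>i<n. sface l q n i f)"

lemma bdry_eq_sum_sface: "bdry l q n f = (\<Sum>j\<le>n. sface l q n j f)"
  by (simp add: bdry_def sface_def)

lemma linop_tau[simp]: "linop (tau l q n)" unfolding tau_def by (intro linop_compose_scal linop_cyc)
lemma linop_tau_pow[simp]: "linop (tau l q n ^^ k)" by (intro linop_funpow linop_tau)
lemma linop_cyc_norm[simp]: "linop (cyc_norm l q n)" unfolding cyc_norm_def by (intro linop_compose_sum) simp
lemma linop_sface[simp]: "linop (sface l q n i)" unfolding sface_def by (intro linop_compose_scal linop_face)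

lemma tau_tens[simp]: "f \<in> tens n \<Longrightarrow> tau l q n f \<in> tens n" by (simp add: tau_def)
lemma tau_pow_tens[simp]: "f \<in> tens n \<Longrightarrow> (tau l q n ^^ k) f \<in> tens n" by (induction k) auto
lemma cyc_norm_tens[simp]: "f \<in> tens n \<Longrightarrow> cyc_norm l q n f \<in> tens n" by (simp add: cyc_norm_def)
lemma sface_tens[simp]: "f \<in> tens (Suc m) \<Longrightarrow> sface l q (Suc m) j f \<in> tens m"
  by (simp add: sface_def)
lemma bdry_tens[simp]: "f \<in> tens (Suc m) \<Longrightarrow> bdry l q (Suc m) f \<in> tens m"
  by (simp add: bdry_eq_sum_sface)

lemma sface_basis_lt: "j < N \<Longrightarrow> sface l q N j (basis u) = scal ((-1) ^ j) (basis (merge_at j u))"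
  by (simp add: sface_def face_def mu_basis)

lemma sface_basis_eq: "length u = Suc N \<Longrightarrow> sface l q N N (basis u) = scal ((-1) ^ N * cyc_coeff l q u) (basis (merge_at 0 (rotr u)))"
  by (simp add: sface_def face_def cyc_basis linop_scal[OF linop_mu] mu_basis scal_scal)

lemma mu_cyc_basis:
  assumes len: "length w = Suc (Suc m)" and i: "1 \<le> i" "i \<le> m"
  shows "mu i (cyc l q (Suc m) (basis w)) = cyc l q m (mu (i - 1) (basis w))"
proof -
  obtain xs a where w: "w = xs @ [a]" using len by (cases w rule: rev_cases) auto
  have lxs: "length xs = Suc m" using len w by simp
  obtain i' where i': "i = Suc i'" using i by (cases i) auto
  have lm: "length (merge_at i' xs) = m" using lxs i i' by (simp add: length_merge_at)
  have sm: "sum_list (merge_at i' xs) = sum_list xs" using lxs i i' by (simp add: sum_list_merge_at)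
  have "mu i (cyc l q (Suc m) (basis w)) = scal (cyc_coeff l q w) (basis (a # merge_at i' xs))"
    using len by (simp add: cyc_basis linop_scal[OF linop_mu] mu_basis w i')
  moreover have "cyc l q m (mu (i - 1) (basis w)) = scal (cyc_coeff l q (merge_at i' xs @ [a])) (basis (a # merge_at i' xs))"
    using lxs i i' lm by (simp add: mu_basis w merge_at_append cyc_basis)
  moreover have "cyc_coeff l q (merge_at i' xs @ [a]) = cyc_coeff l q w" using sm by (simp add: w cyc_coeff_snoc)
  ultimately show ?thesis by simp
qed

lemma mu0_cyc_cyc_basis:
  assumes len: "length w = Suc (Suc m)"
  shows "mu 0 (cyc l q (Suc m) (cyc l q (Suc m) (basis w))) = cyc l q m (mu m (basis w))"
proof -
  obtain ys b a where w: "w = ys @ [b, a]" and lys: "length ys = m"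
    using len by (cases w rule: rev_cases; cases "butlast w" rule: rev_cases) auto
  have "mu 0 (cyc l q (Suc m) (cyc l q (Suc m) (basis w)))
      = scal (cyc_coeff l q w * cyc_coeff l q (a # ys @ [b])) (basis ((b + a) # ys))"
    using lys by (simp add: w cyc_basis rotr_def butlast_append linop_scal[OF linop_cyc]
        linop_scal[OF linop_mu] mu_basis scal_scal)
  moreover have "cyc l q m (mu m (basis w)) = scal (cyc_coeff l q (ys @ [b + a])) (basis ((b + a) # ys))"
    using lys by (simp add: w mu_basis merge_at_def nth_append cyc_basis)
  moreover have "cyc_coeff l q w * cyc_coeff l q (a # ys @ [b]) = cyc_coeff l q (ys @ [b + a])"
    by (simp add: w cyc_coeff_def power_add algebra_simps)
  ultimately show ?thesis by simp
qed

lemma face_cyc: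
  assumes f: "f \<in> tens (Suc m)" and i: "1 \<le> i" "i \<le> Suc m"
  shows "face l q (Suc m) i (cyc l q (Suc m) f) = cyc l q m (face l q (Suc m) (i - 1) f)"
proof (rule linop_eq_on_tens[OF linop_compose[OF linop_face linop_cyc] linop_compose[OF linop_cyc linop_face] f])
  fix w :: "nat list" assume len: "length w = Suc (Suc m)"
  consider "i \<le> m" | "i = Suc m" using i by linarith
  then show "face l q (Suc m) i (cyc l q (Suc m) (basis w)) = cyc l q m (face l q (Suc m) (i - 1) (basis w))"
  proof cases
    case 1
    then have "i < Suc m" "i - 1 < Suc m" by auto
    then show ?thesis using mu_cyc_basis[OF len i(1) 1] by (simp add: face_def)
  next
    case 2
    then show ?thesis using mu0_cyc_cyc_basis[OF len] by (simp add: face_def)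
  qed
qed

lemma sface_tau:
  assumes f: "f \<in> tens (Suc m)" and i: "1 \<le> i" "i \<le> Suc m"
  shows "sface l q (Suc m) i (tau l q (Suc m) f) = tau l q m (sface l q (Suc m) (i - 1) f)"
proof -
  obtain i' where i': "i = Suc i'" using i by (cases i) auto
  have ff: "fin_supp f" "fin_supp (cyc l q (Suc m) f)" "fin_supp (face l q (Suc m) i' f)"
    using tens_fin_supp[OF f] tens_fin_supp[OF cyc_tens[OF f]] tens_fin_supp[OF face_tens[OF f]] by auto
  have "sface l q (Suc m) i (tau l q (Suc m) f) = scal ((-1) ^ i * (-1) ^ Suc m) (face l q (Suc m) i (cyc l q (Suc m) f))"
    using ff by (simp add: sface_def tau_def linop_scal[OF linop_face] scal_scal)
  also have "\<dots> = scal ((-1) ^ m * (-1) ^ i') (cyc l q m (face l q (Suc m) i' f))"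
    using face_cyc[OF f i] by (simp add: i' mult.commute)
  also have "\<dots> = tau l q m (sface l q (Suc m) (i - 1) f)"
    using ff by (simp add: sface_def tau_def linop_scal[OF linop_cyc] scal_scal i')
  finally show ?thesis .
qed

lemma sface0_tau:
  assumes f: "f \<in> tens (Suc m)"
  shows "sface l q (Suc m) 0 (tau l q (Suc m) f) = sface l q (Suc m) (Suc m) f"
proof -
  have ff: "fin_supp (cyc l q (Suc m) f)" using tens_fin_supp[OF cyc_tens[OF f]] .
  show ?thesis using ff by (simp add: sface_def tau_def face_def linop_scal[OF linop_mu])
qed

lemma sface_tau_pow_le:
  assumes f: "f \<in> tens (Suc m)" and "k \<le> i" "i \<le> Suc m"
  shows "sface l q (Suc m) i ((tau l q (Suc m) ^^ k) f) = (tau l q m ^^ k) (sface l q (Suc m) (i - k) f)"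
  using assms(2,3)
proof (induction k arbitrary: i)
  case (Suc k)
  then have i: "1 \<le> i" "i - 1 \<le> Suc m" "k \<le> i - 1" by auto
  have "sface l q (Suc m) i ((tau l q (Suc m) ^^ Suc k) f)
      = tau l q m (sface l q (Suc m) (i - 1) ((tau l q (Suc m) ^^ k) f))"
    using sface_tau[OF tau_pow_tens[OF f] i(1) Suc.prems(2)] by simp
  also have "\<dots> = tau l q m ((tau l q m ^^ k) (sface l q (Suc m) (i - 1 - k) f))"
    by (simp only: Suc.IH[OF i(3) i(2)])
  also have "\<dots> = (tau l q m ^^ Suc k) (sface l q (Suc m) (i - Suc k) f)" by simp
  finally show ?case .
qed simp

lemma sface_tau_pow_gt:
  assumes f: "f \<in> tens (Suc m)" and "i < k" "k \<le> Suc m"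
  shows "sface l q (Suc m) i ((tau l q (Suc m) ^^ k) f)
       = (tau l q m ^^ (k - 1)) (sface l q (Suc m) (Suc m + Suc i - k) f)"
proof -
  define j where "j = k - Suc i"
  have k: "k = i + Suc j" using assms(2) by (simp add: j_def)
  have "(tau l q (Suc m) ^^ k) f = (tau l q (Suc m) ^^ i) (tau l q (Suc m) ((tau l q (Suc m) ^^ j) f))"
    by (simp only: k funpow_add funpow.simps(2) comp_apply)
  then have "sface l q (Suc m) i ((tau l q (Suc m) ^^ k) f)
      = (tau l q m ^^ i) (sface l q (Suc m) 0 (tau l q (Suc m) ((tau l q (Suc m) ^^ j) f)))"
    using sface_tau_pow_le[OF tau_tens[OF tau_pow_tens[OF f]], of i i] assms by simp
  also have "\<dots> = (tau l q m ^^ i) ((tau l q m ^^ j) (sface l q (Suc m) (Suc m - j) f))"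
    using sface_tau_pow_le[OF f, of j "Suc m"] assms by (simp add: sface0_tau[OF tau_pow_tens[OF f]] k)
  finally show ?thesis by (simp add: k funpow_add)
qed

lemma bij_betw_face_shift:
  "bij_betw (\<lambda>(i, k). if k \<le> i then (k, i - k) else (k - 1, Suc m + Suc i - k))
     ({..<Suc m} \<times> {..Suc m}) ({..m} \<times> {..Suc m})"
  by (rule bij_betw_byWitness[where f' = "\<lambda>(p, j). if j \<le> m - p then (j + p, p) else (j + p - Suc m, Suc p)"])
    (auto split: if_splits)

text \<open>The classical identity \<open>b' N = N b\<close>: by the two lemmas above every term \<open>d\<^sub>i \<tau>\<^sup>k\<close>
  of \<open>b' N\<close> equals \<open>\<tau>\<^sup>p d\<^sub>j\<close> for exactly one pair \<open>(p, j)\<close> of \<open>N b\<close>.\<close>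

lemma bar_bdry_cyc_norm:
  assumes f: "f \<in> tens (Suc m)"
  shows "bar_bdry l q (Suc m) (cyc_norm l q (Suc m) f) = cyc_norm l q m (bdry l q (Suc m) f)"
proof -
  let ?T = "tau l q (Suc m)" and ?T' = "tau l q m" and ?d = "sface l q (Suc m)"
  define H where "H = (\<lambda>(p, j). (?T' ^^ p) (?d j f))"
  have "bar_bdry l q (Suc m) (cyc_norm l q (Suc m) f) = (\<Sum>i<Suc m. ?d i (\<Sum>k\<le>Suc m. (?T ^^ k) f))"
    by (simp add: bar_bdry_def cyc_norm_def)
  also have "\<dots> = (\<Sum>i<Suc m. \<Sum>k\<le>Suc m. ?d i ((?T ^^ k) f))"
    using tens_fin_supp[OF tau_pow_tens[OF f]] by (intro sum.cong refl linop_sum[OF linop_sface]) simp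
  also have "\<dots> = (\<Sum>(i, k)\<in>{..<Suc m} \<times> {..Suc m}.
      H (if k \<le> i then (k, i - k) else (k - 1, Suc m + Suc i - k)))"
    unfolding sum.cartesian_product
    by (intro sum.cong refl) (auto simp: H_def sface_tau_pow_le[OF f] sface_tau_pow_gt[OF f])
  also have "\<dots> = (\<Sum>(p, j)\<in>{..m} \<times> {..Suc m}. H (p, j))"
    using sum.reindex_bij_betw[OF bij_betw_face_shift, of H m] by (simp add: case_prod_beta' if_distrib)
  also have "\<dots> = (\<Sum>p\<le>m. \<Sum>j\<le>Suc m. H (p, j))"
    by (rule sum.cartesian_product[symmetric])
  also have "\<dots> = (\<Sum>p\<le>m. (?T' ^^ p) (\<Sum>j\<le>Suc m. ?d j f))"
    unfolding H_def using tens_fin_supp[OF sface_tens[OF f]]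
    by (simp add: linop_sum[OF linop_tau_pow] del: sum.atMost_Suc)
  also have "\<dots> = cyc_norm l q m (bdry l q (Suc m) f)"
    by (simp add: cyc_norm_def bdry_eq_sum_sface)
  finally show ?thesis .
qed

lemma tau_pow_eq_cyc_pow: "fin_supp f \<Longrightarrow> (tau l q n ^^ k) f = scal ((-1) ^ (n * k)) ((cyc l q n ^^ k) f)"
proof (induction k)
  case 0 then show ?case by simp
next
  case (Suc k)
  have fk: "fin_supp ((cyc l q n ^^ k) f)" using Suc.prems by (rule linop_fin_supp[OF linop_funpow[OF linop_cyc]])
  have "(tau l q n ^^ Suc k) f = tau l q n ((tau l q n ^^ k) f)" by (simp only: funpow.simps comp_apply)
  also have "\<dots> = tau l q n (scal ((-1) ^ (n * k)) ((cyc l q n ^^ k) f))" by (simp only: Suc.IH[OF Suc.prems])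
  also have "\<dots> = scal ((-1) ^ n) (cyc l q n (scal ((-1) ^ (n * k)) ((cyc l q n ^^ k) f)))" by (rule tau_def)
  also have "\<dots> = scal ((-1) ^ (n * Suc k)) ((cyc l q n ^^ Suc k) f)"
    using fk by (simp add: linop_scal[OF linop_cyc] scal_scal power_add)
  finally show ?case .
qed

lemma tau_pow_Suc_eq_Tcyc: "fin_supp f \<Longrightarrow> (tau l q n ^^ Suc n) f = Tcyc l q n f"
proof -
  assume f: "fin_supp f"
  have "even (n * Suc n)" by simp
  then have "(-1 :: complex) ^ (n * Suc n) = 1" by simp
  then show ?thesis using tau_pow_eq_cyc_pow[OF f, where l=l and q=q and n=n and k="Suc n"] by (simp add: Tcyc_def)
qed

lemma cyc_norm_diff_tau_left:
  assumes f: "fin_supp f"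
  shows "cyc_norm l q n f - tau l q n (cyc_norm l q n f) = f - Tcyc l q n f"
proof -
  let ?T = "tau l q n"
  have fs1: "\<And>k. fin_supp ((?T ^^ k) f)" using f by (rule linop_fin_supp[OF linop_tau_pow])
  have "?T (cyc_norm l q n f) = (\<Sum>k\<le>n. ?T ((?T ^^ k) f))"
    unfolding cyc_norm_def by (rule linop_sum[OF linop_tau fs1])
  also have "\<dots> = (\<Sum>k\<le>n. (?T ^^ Suc k) f)" by simp
  finally have e: "?T (cyc_norm l q n f) = (\<Sum>k\<le>n. (?T ^^ Suc k) f)" .
  have "cyc_norm l q n f - ?T (cyc_norm l q n f) = (\<Sum>k\<le>n. (?T ^^ k) f - (?T ^^ Suc k) f)"
    unfolding e by (simp add: cyc_norm_def sum_subtractf)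
  also have "\<dots> = (?T ^^ 0) f - (?T ^^ Suc n) f" by (rule sum_telescope)
  also have "\<dots> = f - Tcyc l q n f" using tau_pow_Suc_eq_Tcyc[OF f] by simp
  finally show ?thesis .
qed

lemma cyc_norm_diff_tau_right:
  assumes f: "fin_supp f"
  shows "cyc_norm l q n f - cyc_norm l q n (tau l q n f) = f - Tcyc l q n f"
proof -
  let ?T = "tau l q n"
  have "cyc_norm l q n (?T f) = (\<Sum>k\<le>n. (?T ^^ Suc k) f)"
    unfolding cyc_norm_def by (simp only: funpow_Suc_right comp_apply)
  then have "cyc_norm l q n f - cyc_norm l q n (?T f) = (\<Sum>k\<le>n. (?T ^^ k) f - (?T ^^ Suc k) f)"
    unfolding cyc_norm_def by (simp add: sum_subtractf)
  also have "\<dots> = (?T ^^ 0) f - (?T ^^ Suc n) f" by (rule sum_telescope)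
  also have "\<dots> = f - Tcyc l q n f" using tau_pow_Suc_eq_Tcyc[OF f] by simp
  finally show ?thesis .
qed

lemma cyc_norm_Tcyc_commute:
  assumes f: "fin_supp f"
  shows "cyc_norm l q n (Tcyc l q n f) = Tcyc l q n (cyc_norm l q n f)"
proof -
  let ?T = "tau l q n"
  have fs1: "\<And>k. fin_supp ((?T ^^ k) f)" using f by (rule linop_fin_supp[OF linop_tau_pow])
  have fT: "fin_supp (Tcyc l q n f)" using f by (rule linop_fin_supp[OF linop_Tcyc])
  have "cyc_norm l q n (Tcyc l q n f) = (\<Sum>k\<le>n. (?T ^^ k) ((?T ^^ Suc n) f))"
    unfolding cyc_norm_def using tau_pow_Suc_eq_Tcyc[OF f] by simp
  also have "\<dots> = (\<Sum>k\<le>n. (?T ^^ Suc n) ((?T ^^ k) f))"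
    by (intro sum.cong refl) (metis add.commute comp_apply funpow_add)
  also have "\<dots> = (\<Sum>k\<le>n. Tcyc l q n ((?T ^^ k) f))"
    using fs1 by (intro sum.cong refl tau_pow_Suc_eq_Tcyc)
  also have "\<dots> = Tcyc l q n (cyc_norm l q n f)"
    unfolding cyc_norm_def using linop_sum[OF linop_Tcyc, of "{..n}" "\<lambda>k. (?T ^^ k) f"] fs1 by simp
  finally show ?thesis .
qed

lemma tau_pow_basis:
  assumes "length w = Suc n"
  shows "\<exists>c. (tau l q n ^^ k) (basis w) = scal c (basis ((rotr ^^ k) w))"
  using tau_pow_eq_cyc_pow[OF fin_supp_basis[of w], where l=l and q=q and n=n and k=k]
    cyc_pow_basis[OF assms, where l=l and q=q and k=k] by (auto simp: scal_scal)

section \<open>Splitting the first factor\<close>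

definition split_hd :: "(nat list \<Rightarrow> complex) \<Rightarrow> (nat list \<Rightarrow> complex)" where
  "split_hd = kernel_op (\<lambda>w. \<Sum>m<hd w. basis ((hd w - m) # m # tl w))"

definition resplit_hd :: "(nat list \<Rightarrow> complex) \<Rightarrow> (nat list \<Rightarrow> complex)" where
  "resplit_hd = kernel_op (\<lambda>w. \<Sum>m<w ! 1. basis ((w ! 0 + w ! 1 - m) # m # drop 2 w))"

definition hd_deg :: "(nat list \<Rightarrow> complex) \<Rightarrow> (nat list \<Rightarrow> complex)" where
  "hd_deg = diag_op (\<lambda>w. of_nat (hd w))"

lemma linop_split_hd[simp]: "linop split_hd" unfolding split_hd_def by (rule linop_kernel_op) simp
lemma linop_resplit_hd[simp]: "linop resplit_hd" unfolding resplit_hd_def by (rule linop_kernel_op) simp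
lemma linop_hd_deg[simp]: "linop hd_deg" unfolding hd_deg_def by simp

lemma split_hd_basis: "split_hd (basis (a # r)) = (\<Sum>m<a. basis ((a - m) # m # r))"
  unfolding split_hd_def by (simp add: kernel_op_basis)

lemma resplit_hd_basis: "resplit_hd (basis (a # b # r)) = (\<Sum>m<b. basis ((a + b - m) # m # r))"
  unfolding resplit_hd_def by (simp add: kernel_op_basis)

lemma hd_deg_basis: "hd_deg (basis w) = scal (of_nat (hd w)) (basis w)"
  by (simp add: hd_deg_def diag_op_basis)

lemma split_hd_tens[simp]: "f \<in> tens n \<Longrightarrow> split_hd f \<in> tens (Suc n)"
proof (rule linop_maps_tens[OF linop_split_hd])
  fix w :: "nat list" assume "length w = Suc n"
  then show "split_hd (basis w) \<in> tens (Suc n)" by (cases w) (auto simp: split_hd_basis)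
qed

lemma resplit_hd_tens[simp]: "f \<in> tens (Suc n) \<Longrightarrow> resplit_hd f \<in> tens (Suc n)"
proof (rule linop_maps_tens[OF linop_resplit_hd])
  fix w :: "nat list" assume "length w = Suc (Suc n)"
  then obtain a b r where "w = a # b # r" "length r = n" by (cases w; cases "tl w") auto
  then show "resplit_hd (basis w) \<in> tens (Suc n)" by (auto simp: resplit_hd_basis)
qed

lemma hd_deg_tens[simp]: "f \<in> tens n \<Longrightarrow> hd_deg f \<in> tens n"
  by (simp add: hd_deg_def)

lemma mu_sum: "mu j (\<Sum>a\<in>A. basis (g a)) = (\<Sum>a\<in>A. basis (merge_at j (g a)))"
  by (simp add: linop_sum mu_basis)

lemma mu0_split_hd: "f \<in> tens n \<Longrightarrow> mu 0 (split_hd f) = hd_deg f"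
proof (rule linop_eq_on_tens[where F="\<lambda>f. mu 0 (split_hd f)"])
  fix w :: "nat list" assume "length w = Suc n"
  then obtain a r where w: "w = a # r" by (cases w) auto
  have "mu 0 (split_hd (basis w)) = (\<Sum>m<a. basis w)"
    by (simp add: split_hd_basis w mu_sum)
  also have "\<dots> = hd_deg (basis w)"
    using scal_sum_left[of "\<lambda>_. 1" "{..<a}" "basis w"] by (simp add: hd_deg_basis w)
  finally show "mu 0 (split_hd (basis w)) = hd_deg (basis w)" .
qed (simp_all add: linop_compose)

lemma split_hd_mu0:
  assumes "f \<in> tens (Suc n)"
  shows "split_hd (mu 0 f) = resplit_hd f + mu 1 (split_hd f)"
proof (rule linop_eq_on_tens[OF _ _ assms,
      where F="\<lambda>f. split_hd (mu 0 f)" and G="\<lambda>f. resplit_hd f + mu 1 (split_hd f)"])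
  show "linop (\<lambda>f. split_hd (mu 0 f))" by (rule linop_compose) simp_all
  show "linop (\<lambda>f. resplit_hd f + mu 1 (split_hd f))"
    by (rule linop_compose_add[OF linop_resplit_hd linop_compose[OF linop_mu linop_split_hd]])
  fix w :: "nat list" assume "length w = Suc (Suc n)"
  then obtain a b r where w: "w = a # b # r" by (cases w; cases "tl w") auto
  have "split_hd (mu 0 (basis w)) = (\<Sum>m<b + a. basis ((a + b - m) # m # r))"
    by (simp add: mu_basis split_hd_basis w add.commute)
  also have "\<dots> = (\<Sum>m<b. basis ((a + b - m) # m # r)) + (\<Sum>m<a. basis ((a + b - (b + m)) # (b + m) # r))"
    by (rule sum_lessThan_add)
  also have "\<dots> = resplit_hd (basis w) + mu 1 (split_hd (basis w))"
    by (simp add: resplit_hd_basis split_hd_basis mu_sum merge_at_def w add.commute)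
  finally show "split_hd (mu 0 (basis w)) = resplit_hd (basis w) + mu 1 (split_hd (basis w))" .
qed

lemma mu_split_hd:
  "f \<in> tens n \<Longrightarrow> Suc k < n \<Longrightarrow> mu (Suc (Suc k)) (split_hd f) = split_hd (mu (Suc k) f)"
proof (rule linop_eq_on_tens[where F="\<lambda>f. mu (Suc (Suc k)) (split_hd f)"])
  fix w :: "nat list" assume "length w = Suc n"
  then obtain a r where w: "w = a # r" by (cases w) auto
  show "mu (Suc (Suc k)) (split_hd (basis w)) = split_hd (mu (Suc k) (basis w))"
    by (simp add: split_hd_basis mu_sum mu_basis w)
qed (simp_all add: linop_compose)

lemma mu0_cyc_split_hd:
  assumes "f \<in> tens (Suc m)"
  shows "mu 0 (cyc l q (Suc (Suc m)) (split_hd f)) = resplit_hd (cyc l q (Suc m) f)"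
proof (rule linop_eq_on_tens[OF _ _ assms,
      where F="\<lambda>f. mu 0 (cyc l q (Suc (Suc m)) (split_hd f))" and G="\<lambda>f. resplit_hd (cyc l q (Suc m) f)"])
  show "linop (\<lambda>f. mu 0 (cyc l q (Suc (Suc m)) (split_hd f)))"
    by (rule linop_compose[OF linop_mu linop_compose[OF linop_cyc linop_split_hd]])
  show "linop (\<lambda>f. resplit_hd (cyc l q (Suc m) f))" by (rule linop_compose) simp_all
  fix w :: "nat list" assume len: "length w = Suc (Suc m)"
  then obtain a v where w: "w = a # v" and "length v = Suc m" by (cases w) auto
  then have v: "v \<noteq> []" by auto
  have "cyc l q (Suc (Suc m)) (basis ((a - k) # k # v)) =
      scal (cyc_coeff l q w) (basis (last v # (a - k) # k # butlast v))" if "k < a" for k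
    using that v len by (simp add: cyc_basis cyc_coeff_def rotr_def w)
  then have "mu 0 (cyc l q (Suc (Suc m)) (split_hd (basis w))) =
      scal (cyc_coeff l q w) (\<Sum>k<a. basis ((last v + (a - k)) # k # butlast v))"
    by (simp add: split_hd_basis w linop_sum linop_scal mu_basis scal_sum)
  also have "\<dots> = resplit_hd (cyc l q (Suc m) (basis w))"
    using v len by (simp add: cyc_basis rotr_def w linop_scal resplit_hd_basis)
  finally show "mu 0 (cyc l q (Suc (Suc m)) (split_hd (basis w))) = resplit_hd (cyc l q (Suc m) (basis w))" .
qed

text \<open>Assembled from the four identities above; the middle faces of \<open>b\<close> and \<open>b'\<close> cancel in pairs.\<close>

lemma split_hd_homotopy:
  assumes f: "f \<in> tens (Suc m)"
  shows "bdry l q (Suc (Suc m)) (split_hd f) + split_hd (bar_bdry l q (Suc m) f)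
       = hd_deg f + resplit_hd (f - tau l q (Suc m) f)"
proof -
  let ?g = "split_hd f" and ?d = "sface l q (Suc (Suc m))"
  define Y where "Y k = split_hd (mu (Suc k) f)" for k
  have "bdry l q (Suc (Suc m)) ?g = (\<Sum>j\<le>Suc (Suc m). ?d j ?g)" by (rule bdry_eq_sum_sface)
  also have "\<dots> = ?d 0 ?g + ?d 1 ?g + (\<Sum>k<m. ?d (Suc (Suc k)) ?g) + ?d (Suc (Suc m)) ?g"
    by (simp only: sum.atMost_Suc[where n="Suc m"] sum.atMost_Suc_shift[where n=m] sum.atMost_shift[where n=m]
        add.assoc One_nat_def)
  also have "\<dots> = hd_deg f - mu 1 ?g + (\<Sum>k<m. scal ((-1) ^ k) (Y k))
      + scal ((-1) ^ m) (resplit_hd (cyc l q (Suc m) f))"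
    using f by (simp add: sface_def face_def scal_minus_one mu0_split_hd mu_split_hd mu0_cyc_split_hd Y_def)
  finally have b: "bdry l q (Suc (Suc m)) ?g = \<dots>" .
  have "bar_bdry l q (Suc m) f = mu 0 f - (\<Sum>k<m. scal ((-1) ^ k) (mu (Suc k) f))"
    by (simp add: bar_bdry_def sum.lessThan_Suc_shift sface_def face_def scal_uminus_left sum_negf
        del: sum.lessThan_Suc)
  moreover have "fin_supp (mu j f)" for j using f by (simp add: linop_fin_supp tens_fin_supp)
  ultimately have b': "split_hd (bar_bdry l q (Suc m) f) = resplit_hd f + mu 1 ?g - (\<Sum>k<m. scal ((-1) ^ k) (Y k))"
    using f by (simp add: linop_diff[OF linop_split_hd] linop_sum[OF linop_split_hd]
        linop_scal[OF linop_split_hd] split_hd_mu0 Y_def)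
  have "resplit_hd (f - tau l q (Suc m) f) = resplit_hd f + scal ((-1) ^ m) (resplit_hd (cyc l q (Suc m) f))"
    using tens_fin_supp[OF f] tens_fin_supp[OF cyc_tens[OF f]]
    by (simp add: linop_add[OF linop_resplit_hd] linop_scal[OF linop_resplit_hd] tens_fin_supp
        tau_def scal_uminus_left)
  then show ?thesis unfolding b b' by (simp add: algebra_simps)
qed

lemma relW_iff: "g \<in> relW l q n \<longleftrightarrow> (\<exists>f1\<in>tens n. \<exists>f2\<in>tens n.
      g = (f1 - Tcyc l q n f1) + (f2 - scal ((-1) ^ n) (cyc l q n f2)))"
  by (simp add: relW_def)

lemma relW_add: "g \<in> relW l q n \<Longrightarrow> g' \<in> relW l q n \<Longrightarrow> g + g' \<in> relW l q n"
proof -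
  assume "g \<in> relW l q n" "g' \<in> relW l q n"
  then obtain f1 f2 f1' f2' where f: "f1 \<in> tens n" "f2 \<in> tens n" "f1' \<in> tens n" "f2' \<in> tens n"
    and g: "g = (f1 - Tcyc l q n f1) + (f2 - scal ((-1) ^ n) (cyc l q n f2))"
    and g': "g' = (f1' - Tcyc l q n f1') + (f2' - scal ((-1) ^ n) (cyc l q n f2'))"
    unfolding relW_iff by blast
  have fs: "fin_supp f1" "fin_supp f2" "fin_supp f1'" "fin_supp f2'" using f by (simp_all add: tens_fin_supp)
  have "g + g' = ((f1 + f1') - Tcyc l q n (f1 + f1')) + ((f2 + f2') - scal ((-1) ^ n) (cyc l q n (f2 + f2')))"
    unfolding g g' linop_add[OF linop_Tcyc fs(1,3)] linop_add[OF linop_cyc fs(2,4)] scal_add by (simp add: algebra_simps)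
  then show ?thesis unfolding relW_iff using f by (intro bexI[of _ "f1 + f1'"] bexI[of _ "f2 + f2'"]) auto
qed

lemma relW_scal: "g \<in> relW l q n \<Longrightarrow> scal c g \<in> relW l q n"
proof -
  assume "g \<in> relW l q n"
  then obtain f1 f2 where f: "f1 \<in> tens n" "f2 \<in> tens n"
    and g: "g = (f1 - Tcyc l q n f1) + (f2 - scal ((-1) ^ n) (cyc l q n f2))"
    unfolding relW_iff by blast
  have fs: "fin_supp f1" "fin_supp f2" using f by (simp_all add: tens_fin_supp)
  have "scal c g = (scal c f1 - Tcyc l q n (scal c f1)) + (scal c f2 - scal ((-1) ^ n) (cyc l q n (scal c f2)))"
    unfolding g linop_scal[OF linop_Tcyc fs(1)] linop_scal[OF linop_cyc fs(2)] scal_add scal_diff scal_scal by (simp add: mult.commute)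
  then show ?thesis unfolding relW_iff using f by (intro bexI[of _ "scal c f1"] bexI[of _ "scal c f2"]) auto
qed

lemma relW_0[simp]: "0 \<in> relW l q n"
  unfolding relW_iff by (intro bexI[of _ 0]) (auto simp: linop_zero[OF linop_Tcyc] linop_zero[OF linop_cyc])

lemma relW_uminus: "g \<in> relW l q n \<Longrightarrow> - g \<in> relW l q n"
  using relW_scal[of g l q n "-1"] by (simp add: scal_minus_one)

lemma relW_diff: "g \<in> relW l q n \<Longrightarrow> g' \<in> relW l q n \<Longrightarrow> g - g' \<in> relW l q n"
  using relW_add[of g l q n "- g'"] relW_uminus[of g' l q n] by simp

lemma relW_sum: "(\<And>a. a \<in> A \<Longrightarrow> g a \<in> relW l q n) \<Longrightarrow> (\<Sum>a\<in>A. g a) \<in> relW l q n"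
  by (induction A rule: infinite_finite_induct) (auto intro: relW_add)

lemma relW_Tcyc: "f \<in> tens n \<Longrightarrow> f - Tcyc l q n f \<in> relW l q n"
  unfolding relW_iff by (intro bexI[of _ f] bexI[of _ 0]) (auto simp: linop_zero[OF linop_cyc])

lemma relW_tau: "f \<in> tens n \<Longrightarrow> f - tau l q n f \<in> relW l q n"
  unfolding relW_iff tau_def by (intro bexI[of _ 0] bexI[of _ f]) (auto simp: linop_zero[OF linop_Tcyc])

lemma tau_pow_diff_relW: "g \<in> tens n \<Longrightarrow> (tau l q n ^^ k) g - g \<in> relW l q n"
proof (induction k)
  case (Suc k)
  let ?g = "(tau l q n ^^ k) g"
  have "?g - g \<in> relW l q n" using Suc by blast
  moreover have "?g - tau l q n ?g \<in> relW l q n" by (rule relW_tau) (simp add: Suc.prems)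
  ultimately have "(?g - g) - (?g - tau l q n ?g) \<in> relW l q n" by (rule relW_diff)
  then show ?case by (simp add: algebra_simps fun_diff_def)
qed (simp only: funpow_0 diff_self relW_0)

lemma linop_image_in_relW:
  assumes "linop F" "f \<in> tens n" "\<And>w. length w = Suc n \<Longrightarrow> F (basis w) \<in> relW l q m"
  shows "F f \<in> relW l q m"
proof -
  have "F f = (\<Sum>w\<in>supp f. scal (f w) (F (basis w)))" by (rule linop_expansion[OF assms(1) tens_fin_supp[OF assms(2)]])
  also have "\<dots> \<in> relW l q m" using assms(3) tens_len[OF assms(2)] by (intro relW_sum relW_scal) auto
  finally show ?thesis .
qed

lemma bounds_iff: "g \<in> bounds l q n \<longleftrightarrow> (\<exists>h\<in>tens (Suc n). \<exists>r\<in>relW l q n. g = bdry l q (Suc n) h + r)"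
  by (simp add: bounds_def)

lemma bounds_add: "g \<in> bounds l q n \<Longrightarrow> g' \<in> bounds l q n \<Longrightarrow> g + g' \<in> bounds l q n"
proof -
  assume "g \<in> bounds l q n" "g' \<in> bounds l q n"
  then obtain h r h' r' where h: "h \<in> tens (Suc n)" "h' \<in> tens (Suc n)" and r: "r \<in> relW l q n" "r' \<in> relW l q n"
    and g: "g = bdry l q (Suc n) h + r" "g' = bdry l q (Suc n) h' + r'" unfolding bounds_iff by blast
  have "g + g' = bdry l q (Suc n) (h + h') + (r + r')"
    unfolding g using h by (simp add: linop_add[OF linop_bdry] tens_fin_supp algebra_simps)
  then show ?thesis unfolding bounds_iff using h r by (intro bexI[of _ "h + h'"] bexI[of _ "r + r'"]) (auto intro: relW_add)
qed

lemma bounds_scal: "g \<in> bounds l q n \<Longrightarrow> scal c g \<in> bounds l q n"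
proof -
  assume "g \<in> bounds l q n"
  then obtain h r where h: "h \<in> tens (Suc n)" and r: "r \<in> relW l q n"
    and g: "g = bdry l q (Suc n) h + r" unfolding bounds_iff by blast
  have "scal c g = bdry l q (Suc n) (scal c h) + scal c r"
    unfolding g using h by (simp add: linop_scal[OF linop_bdry] tens_fin_supp scal_add)
  then show ?thesis unfolding bounds_iff using h r by (intro bexI[of _ "scal c h"] bexI[of _ "scal c r"]) (auto intro: relW_scal)
qed

lemma bounds_0[simp]: "0 \<in> bounds l q n"
  unfolding bounds_iff by (intro bexI[of _ 0]) (auto simp: linop_zero[OF linop_bdry])

lemma bounds_sum: "(\<And>a. a \<in> A \<Longrightarrow> g a \<in> bounds l q n) \<Longrightarrow> (\<Sum>a\<in>A. g a) \<in> bounds l q n"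
  by (induction A rule: infinite_finite_induct) (auto intro: bounds_add)

lemma bounds_span: "fin_supp f \<Longrightarrow> (\<And>w. w \<in> supp f \<Longrightarrow> basis w \<in> bounds l q n) \<Longrightarrow> f \<in> bounds l q n"
  by (subst basis_expansion, assumption) (intro bounds_sum bounds_scal, auto)

lemma bounds_relW: "g \<in> bounds l q n \<Longrightarrow> r \<in> relW l q n \<Longrightarrow> g + r \<in> bounds l q n"
proof -
  assume "g \<in> bounds l q n" "r \<in> relW l q n"
  then obtain h r' where h: "h \<in> tens (Suc n)" and r: "r' \<in> relW l q n"
    and g: "g = bdry l q (Suc n) h + r'" unfolding bounds_iff by blast
  have "g + r = bdry l q (Suc n) h + (r' + r)" unfolding g by (simp add: algebra_simps)
  then show ?thesis unfolding bounds_iff using h r \<open>r \<in> relW l q n\<close> by (intro bexI[of _ h] bexI[of _ "r' + r"]) (auto intro: relW_add)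
qed

section \<open>Operators diagonal in the total degree\<close>

definition deg_diag :: "(nat \<Rightarrow> complex) \<Rightarrow> (nat list \<Rightarrow> complex) \<Rightarrow> (nat list \<Rightarrow> complex)" where
  "deg_diag d = diag_op (\<lambda>w. d (sum_list w))"

abbreviation total_deg :: "(nat list \<Rightarrow> complex) \<Rightarrow> (nat list \<Rightarrow> complex)" where
  "total_deg \<equiv> deg_diag of_nat"

abbreviation total_deg_inv :: "(nat list \<Rightarrow> complex) \<Rightarrow> (nat list \<Rightarrow> complex)" where
  "total_deg_inv \<equiv> deg_diag (\<lambda>S. inverse (of_nat S))"

definition preserves_deg :: "((nat list \<Rightarrow> complex) \<Rightarrow> (nat list \<Rightarrow> complex)) \<Rightarrow> nat \<Rightarrow> bool" where
  "preserves_deg F n \<longleftrightarrow> (\<forall>w v. length w = Suc n \<longrightarrow> F (basis w) v \<noteq> 0 \<longrightarrow> sum_list v = sum_list w)"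

lemma linop_deg_diag[simp]: "linop (deg_diag d)" by (simp add: deg_diag_def)
lemma deg_diag_tens[simp]: "f \<in> tens n \<Longrightarrow> deg_diag d f \<in> tens n" by (simp add: deg_diag_def)
lemma deg_diag_basis: "deg_diag d (basis w) = scal (d (sum_list w)) (basis w)"
  by (simp add: deg_diag_def diag_op_basis)

lemma deg_diag_commute:
  assumes F: "linop F" and "preserves_deg F n" and f: "f \<in> tens n"
  shows "F (deg_diag d f) = deg_diag d (F f)"
proof (rule linop_eq_on_tens[OF linop_compose[OF F linop_deg_diag] linop_compose[OF linop_deg_diag F] f])
  fix w :: "nat list" assume len: "length w = Suc n"
  have "F (deg_diag d (basis w)) = scal (d (sum_list w)) (F (basis w))"
    by (simp add: deg_diag_basis linop_scal[OF F])
  also have "\<dots> = deg_diag d (F (basis w))"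
  proof
    fix v
    have "F (basis w) v \<noteq> 0 \<Longrightarrow> sum_list v = sum_list w"
      using \<open>preserves_deg F n\<close> len by (auto simp: preserves_deg_def)
    then show "scal (d (sum_list w)) (F (basis w)) v = deg_diag d (F (basis w)) v"
      by (cases "F (basis w) v = 0") (auto simp: scal_apply deg_diag_def diag_op_def)
  qed
  finally show "F (deg_diag d (basis w)) = deg_diag d (F (basis w))" .
qed

lemma preserves_deg_cyc: "preserves_deg (cyc l q n) n"
  unfolding preserves_deg_def
proof (intro allI impI)
  fix w v assume len: "length w = Suc n" and "cyc l q n (basis w) v \<noteq> 0"
  then have "v = rotr w" by (auto simp: cyc_basis dest!: scal_basis_nonzero)
  moreover have "w \<noteq> []" using len by auto
  ultimately show "sum_list v = sum_list w" by simp
qed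

lemma preserves_deg_Tcyc: "preserves_deg (Tcyc l q n) n"
  by (auto simp: preserves_deg_def Tcyc_basis dest!: scal_basis_nonzero)

lemma preserves_deg_bdry: "preserves_deg (bdry l q (Suc m)) (Suc m)"
  unfolding preserves_deg_def
proof (intro allI impI)
  fix w v assume len: "length w = Suc (Suc m)" and "bdry l q (Suc m) (basis w) v \<noteq> 0"
  then have "(\<Sum>j\<le>Suc m. sface l q (Suc m) j (basis w) v) \<noteq> 0"
    by (simp add: bdry_eq_sum_sface sum_fun_apply del: sum.atMost_Suc)
  then obtain j where j: "j \<le> Suc m" "sface l q (Suc m) j (basis w) v \<noteq> 0"
    by (rule sum.not_neutral_contains_not_neutral) simp
  have "w \<noteq> []" using len by auto
  show "sum_list v = sum_list w"
  proof (cases "j < Suc m")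
    case True
    then have "v = merge_at j w" using j by (auto simp: sface_basis_lt dest!: scal_basis_nonzero)
    then show ?thesis using True len by (simp add: sum_list_merge_at)
  next
    case False
    then have "v = merge_at 0 (rotr w)" using j len by (auto simp: sface_basis_eq dest!: scal_basis_nonzero)
    then show ?thesis using len \<open>w \<noteq> []\<close> by (simp add: sum_list_merge_at)
  qed
qed

lemma preserves_deg_split_hd: "preserves_deg split_hd n"
  unfolding preserves_deg_def
proof (intro allI impI)
  fix w v assume "length w = Suc n" and "split_hd (basis w) v \<noteq> 0"
  then obtain a r where w: "w = a # r" and "(\<Sum>m<a. basis ((a - m) # m # r)) v \<noteq> 0"
    by (cases w) (auto simp: split_hd_basis)
  then obtain m where "m < a" "v = (a - m) # m # r"
    by (auto simp: sum_fun_apply basis_apply elim!: sum.not_neutral_contains_not_neutral split: if_splits)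
  then show "sum_list v = sum_list w" by (simp add: w)
qed

lemma preserves_deg_resplit_hd: "preserves_deg resplit_hd (Suc n)"
  unfolding preserves_deg_def
proof (intro allI impI)
  fix w v assume "length w = Suc (Suc n)" and "resplit_hd (basis w) v \<noteq> 0"
  then obtain a b r where w: "w = a # b # r" and "(\<Sum>m<b. basis ((a + b - m) # m # r)) v \<noteq> 0"
    by (cases w; cases "tl w") (auto simp: resplit_hd_basis)
  then obtain m where "m < b" "v = (a + b - m) # m # r"
    by (auto simp: sum_fun_apply basis_apply elim!: sum.not_neutral_contains_not_neutral split: if_splits)
  then show "sum_list v = sum_list w" by (simp add: w)
qed

lemma Tcyc_eq_deg_diag: "f \<in> tens n \<Longrightarrow> Tcyc l q n f = deg_diag (Tcyc_coeff l q) f"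
proof (rule linop_eq_on_tens[OF linop_Tcyc linop_deg_diag])
  fix w :: "nat list" assume "length w = Suc n"
  then show "Tcyc l q n (basis w) = deg_diag (Tcyc_coeff l q) (basis w)"
    by (simp add: Tcyc_basis deg_diag_basis)
qed

lemma Tcyc_split_hd: "f \<in> tens n \<Longrightarrow> Tcyc l q (Suc n) (split_hd f) = split_hd (Tcyc l q n f)"
  by (simp add: Tcyc_eq_deg_diag deg_diag_commute[OF linop_split_hd preserves_deg_split_hd])

lemma Tcyc_resplit_hd: "f \<in> tens (Suc n) \<Longrightarrow> Tcyc l q (Suc n) (resplit_hd f) = resplit_hd (Tcyc l q (Suc n) f)"
  by (simp add: Tcyc_eq_deg_diag deg_diag_commute[OF linop_resplit_hd preserves_deg_resplit_hd])

lemma relW_deg_diag: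
  assumes "g \<in> relW l q n"
  shows "deg_diag d g \<in> relW l q n"
proof -
  obtain f1 f2 where f: "f1 \<in> tens n" "f2 \<in> tens n"
    and g: "g = (f1 - Tcyc l q n f1) + (f2 - scal ((-1) ^ n) (cyc l q n f2))"
    using assms unfolding relW_iff by blast
  have "deg_diag d g = (deg_diag d f1 - Tcyc l q n (deg_diag d f1))
      + (deg_diag d f2 - scal ((-1) ^ n) (cyc l q n (deg_diag d f2)))"
    unfolding g using f tens_fin_supp[OF f(1)] tens_fin_supp[OF f(2)]
      tens_fin_supp[OF Tcyc_tens[OF f(1)]] tens_fin_supp[OF cyc_tens[OF f(2)]]
    by (simp add: linop_add[OF linop_deg_diag] linop_diff[OF linop_deg_diag]
        linop_scal[OF linop_deg_diag] deg_diag_commute[OF linop_Tcyc preserves_deg_Tcyc]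
        deg_diag_commute[OF linop_cyc preserves_deg_cyc])
  then show ?thesis unfolding relW_iff using f by (intro bexI[of _ "deg_diag d f1"] bexI[of _ "deg_diag d f2"]) auto
qed

text \<open>\<open>inverse 0 = 0\<close>, so dividing by the total degree loses exactly the constant component
  \<open>1 \<otimes> \<dots> \<otimes> 1\<close>.\<close>

lemma total_deg_total_deg_inv:
  assumes z: "z \<in> tens n"
  shows "total_deg (total_deg_inv z) = z - scal (z (zero_word (Suc n))) (basis (zero_word (Suc n)))"
proof
  fix w
  show "total_deg (total_deg_inv z) w = (z - scal (z (zero_word (Suc n))) (basis (zero_word (Suc n)))) w"
  proof (cases "sum_list w = 0 \<and> w \<noteq> zero_word (Suc n)")
    case True
    have "z w = 0"
    proof (rule ccontr)
      assume "z w \<noteq> 0"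
      then have "length w = Suc n" using z by (simp add: tens_iff)
      then show False using True zero_word_if_sum_list_0 by blast
    qed
    then show ?thesis using True by (simp add: deg_diag_def diag_op_def scal_apply basis_def)
  next
    case False
    then consider "sum_list w \<noteq> 0" | "w = zero_word (Suc n)" by auto
    then show ?thesis by cases (simp_all add: deg_diag_def diag_op_def scal_apply basis_def)
  qed
qed

section \<open>Reduction to the constant tensor in positive degrees\<close>

lemma hd_deg_cyc_norm_rel:
  assumes f: "f \<in> tens n"
  shows "hd_deg (cyc_norm l q n f) - total_deg f \<in> relW l q n"
proof (rule linop_image_in_relW[OF _ f])
  show "linop (\<lambda>f. hd_deg (cyc_norm l q n f) - total_deg f)"
    by (rule linop_compose_sub[OF linop_compose[OF linop_hd_deg linop_cyc_norm] linop_deg_diag])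
  fix w :: "nat list" assume len: "length w = Suc n"
  let ?T = "tau l q n"
  define h where "h k = (of_nat (hd ((rotr ^^ k) w)) :: complex)" for k
  have hd_deg_tau_pow: "hd_deg ((?T ^^ k) (basis w)) = scal (h k) ((?T ^^ k) (basis w))" for k
  proof -
    obtain c where c: "(?T ^^ k) (basis w) = scal c (basis ((rotr ^^ k) w))" using tau_pow_basis[OF len] by blast
    show ?thesis unfolding c by (simp add: linop_scal[OF linop_hd_deg] hd_deg_basis scal_scal h_def mult.commute)
  qed
  have "hd_deg (cyc_norm l q n (basis w)) = (\<Sum>k\<le>n. scal (h k) ((?T ^^ k) (basis w)))"
    unfolding cyc_norm_def
    by (subst linop_sum[OF linop_hd_deg]) (simp_all add: hd_deg_tau_pow linop_fin_supp[OF linop_tau_pow])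
  moreover have "total_deg (basis w) = (\<Sum>k\<le>n. scal (h k) (basis w))"
    using sum_hd_rotr_pow[OF len] by (simp add: h_def deg_diag_basis scal_sum_left[symmetric] flip: of_nat_sum)
  ultimately have "hd_deg (cyc_norm l q n (basis w)) - total_deg (basis w)
      = (\<Sum>k\<le>n. scal (h k) ((?T ^^ k) (basis w) - basis w))"
    by (simp add: sum_subtractf scal_diff)
  also have "\<dots> \<in> relW l q n" using len by (intro relW_sum relW_scal tau_pow_diff_relW) simp
  finally show "hd_deg (cyc_norm l q n (basis w)) - total_deg (basis w) \<in> relW l q n" .
qed

lemma cyc_norm_relW:
  assumes "g \<in> relW l q m"
  obtains h where "h \<in> tens m" "cyc_norm l q m g = h - Tcyc l q m h"
proof -
  obtain g1 g2 where g: "g1 \<in> tens m" "g2 \<in> tens m"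
    and ge: "g = (g1 - Tcyc l q m g1) + (g2 - tau l q m g2)"
    using assms unfolding relW_iff tau_def by blast
  have fs: "fin_supp g1" "fin_supp g2" "fin_supp (Tcyc l q m g1)" "fin_supp (tau l q m g2)"
    "fin_supp (cyc_norm l q m g1)"
    using g by (simp_all add: tens_fin_supp[of _ m])
  have "cyc_norm l q m g = (cyc_norm l q m g1 - cyc_norm l q m (Tcyc l q m g1))
      + (cyc_norm l q m g2 - cyc_norm l q m (tau l q m g2))"
    unfolding ge using fs by (simp add: linop_add[OF linop_cyc_norm] linop_diff[OF linop_cyc_norm])
  also have "\<dots> = (cyc_norm l q m g1 - Tcyc l q m (cyc_norm l q m g1)) + (g2 - Tcyc l q m g2)"
    using fs by (simp add: cyc_norm_Tcyc_commute cyc_norm_diff_tau_right)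
  also have "\<dots> = (cyc_norm l q m g1 + g2) - Tcyc l q m (cyc_norm l q m g1 + g2)"
    using fs by (simp add: linop_add[OF linop_Tcyc] algebra_simps)
  finally show ?thesis using g by (intro that[of "cyc_norm l q m g1 + g2"]) simp_all
qed

text \<open>The homotopy applied to \<open>N y\<close>: the term \<open>s b' N y = s N b y\<close> lies in the relations
  because \<open>N\<close> maps relations into \<open>im (1 - T)\<close>, and \<open>\<rho> (1 - \<tau>) N y = \<rho> (1 - T) y\<close>.\<close>

lemma total_deg_cycle_in_bounds:
  assumes y: "y \<in> tens (Suc m)" and cycle: "bdry l q (Suc m) y \<in> relW l q m"
  shows "total_deg y \<in> bounds l q (Suc m)"
proof -
  obtain h where h: "h \<in> tens m" and Nb: "cyc_norm l q m (bdry l q (Suc m) y) = h - Tcyc l q m h"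
    using cyc_norm_relW[OF cycle] .
  define Ny where "Ny = cyc_norm l q (Suc m) y"
  have Ny: "Ny \<in> tens (Suc m)" using y by (simp add: Ny_def)
  define r where "r = (hd_deg Ny - total_deg y) + resplit_hd (Ny - tau l q (Suc m) Ny)
      - split_hd (bar_bdry l q (Suc m) Ny)"
  have "split_hd (bar_bdry l q (Suc m) Ny) = split_hd h - Tcyc l q (Suc m) (split_hd h)"
    using h tens_fin_supp[OF h] tens_fin_supp[OF Tcyc_tens[OF h]]
    by (simp add: Ny_def bar_bdry_cyc_norm[OF y] Nb linop_diff[OF linop_split_hd] Tcyc_split_hd)
  moreover have "resplit_hd (Ny - tau l q (Suc m) Ny) = resplit_hd y - Tcyc l q (Suc m) (resplit_hd y)"
    using y tens_fin_supp[OF y] tens_fin_supp[OF Tcyc_tens[OF y]]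
    by (simp add: Ny_def cyc_norm_diff_tau_left linop_diff[OF linop_resplit_hd] Tcyc_resplit_hd)
  ultimately have "r = (hd_deg Ny - total_deg y) + (resplit_hd y - Tcyc l q (Suc m) (resplit_hd y))
      - (split_hd h - Tcyc l q (Suc m) (split_hd h))"
    by (simp add: r_def)
  then have "r \<in> relW l q (Suc m)"
    using relW_diff[OF relW_add[OF hd_deg_cyc_norm_rel[OF y] relW_Tcyc] relW_Tcyc] y h by (simp add: Ny_def)
  moreover have "total_deg y = bdry l q (Suc (Suc m)) (split_hd Ny) + (- r)"
    using split_hd_homotopy[OF Ny, of l q] unfolding r_def by (simp add: algebra_simps)
  ultimately show ?thesis unfolding bounds_iff using Ny
    by (intro bexI[of _ "split_hd Ny"] bexI[of _ "- r"]) (auto intro: relW_uminus)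
qed

lemma cycle_minus_constant_in_bounds:
  assumes z: "z \<in> tens (Suc m)" and cycle: "bdry l q (Suc m) z \<in> relW l q m"
  shows "z - scal (z (zero_word (Suc (Suc m)))) (basis (zero_word (Suc (Suc m)))) \<in> bounds l q (Suc m)"
proof -
  have "bdry l q (Suc m) (total_deg_inv z) \<in> relW l q m"
    using relW_deg_diag[OF cycle] deg_diag_commute[OF linop_bdry preserves_deg_bdry z] by simp
  then have "total_deg (total_deg_inv z) \<in> bounds l q (Suc m)"
    using z by (intro total_deg_cycle_in_bounds) simp_all
  then show ?thesis by (simp add: total_deg_total_deg_inv[OF z])
qed

lemma rotr_zero_word: "rotr (zero_word (Suc n)) = zero_word (Suc n)"
  by (metis replicate_Suc replicate_append_same rotr_snoc)

lemma cyc_coeff_zero_word: "cyc_coeff l q (zero_word (Suc n)) = 1"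
  by (simp add: cyc_coeff_def last_replicate del: replicate_Suc)

lemma cyc_zero_word: "cyc l q n (basis (zero_word (Suc n))) = basis (zero_word (Suc n))"
  by (simp add: cyc_basis rotr_zero_word cyc_coeff_zero_word del: replicate_Suc)

lemma merge_at_zero_word: "Suc j < k \<Longrightarrow> merge_at j (zero_word k) = zero_word (k - 1)"
  by (simp add: zero_word_if_sum_list_0 length_merge_at sum_list_merge_at)

lemma bdry_zero_word:
  "bdry l q (Suc n) (basis (zero_word (Suc (Suc n))))
     = scal (\<Sum>j\<le>Suc n. (-1) ^ j) (basis (zero_word (Suc n)))"
  unfolding bdry_eq_sum_sface scal_sum_left
proof (intro sum.cong refl)
  fix j assume "j \<in> {..Suc n}"
  then consider "j < Suc n" | "j = Suc n" by fastforce
  then show "sface l q (Suc n) j (basis (zero_word (Suc (Suc n)))) = scal ((-1) ^ j) (basis (zero_word (Suc n)))"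
    by cases (simp_all add: sface_basis_lt sface_basis_eq merge_at_zero_word rotr_zero_word cyc_coeff_zero_word
        del: replicate_Suc)
qed

lemma zero_word_in_relW_odd:
  assumes "odd n"
  shows "scal c (basis (zero_word (Suc n))) \<in> relW l q n"
proof -
  define f where "f = scal (c / 2) (basis (zero_word (Suc n)))"
  have "f - scal ((-1) ^ n) (cyc l q n f) = f + f"
    using assms by (simp add: f_def linop_scal[OF linop_cyc] cyc_zero_word scal_minus_one del: replicate_Suc)
  also have "\<dots> = scal c (basis (zero_word (Suc n)))" by (simp add: f_def scal_add_left[symmetric])
  finally have "scal c (basis (zero_word (Suc n))) = (0 - Tcyc l q n 0) + (f - scal ((-1) ^ n) (cyc l q n f))"
    by (simp add: linop_zero[OF linop_Tcyc])
  then show ?thesis unfolding relW_iff by (intro bexI[of _ 0] bexI[of _ f]) (auto simp: f_def)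
qed

text \<open>In even degree \<open>1 - \<tau> = 1 - t\<close> and \<open>1 - T\<close> both kill \<open>1 \<otimes> \<dots> \<otimes> 1\<close>, and no other basis
  tensor is mapped onto it.\<close>

lemma relW_zero_word_coeff:
  assumes "even n" and "g \<in> relW l q n"
  shows "g (zero_word (Suc n)) = 0"
proof -
  obtain f1 f2 where f: "f1 \<in> tens n" "f2 \<in> tens n"
    and g: "g = (f1 - Tcyc l q n f1) + (f2 - scal ((-1) ^ n) (cyc l q n f2))"
    using assms(2) unfolding relW_iff by blast
  have "(\<lambda>f. f - Tcyc l q n f) f1 (zero_word (Suc n)) = 0"
  proof (rule linop_apply_eq_0[OF linop_compose_sub[OF linop_ident linop_Tcyc] f(1)])
    fix w :: "nat list" assume "length w = Suc n"
    then show "(basis w - Tcyc l q n (basis w)) (zero_word (Suc n)) = 0"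
      by (cases "w = zero_word (Suc n)") (simp_all add: Tcyc_basis scal_apply basis_apply Tcyc_coeff_def)
  qed
  moreover have "(\<lambda>f. f - cyc l q n f) f2 (zero_word (Suc n)) = 0"
  proof (rule linop_apply_eq_0[OF linop_compose_sub[OF linop_ident linop_cyc] f(2)])
    fix w :: "nat list" assume len: "length w = Suc n"
    show "(basis w - cyc l q n (basis w)) (zero_word (Suc n)) = 0"
    proof (cases "w = zero_word (Suc n)")
      case True then show ?thesis by (simp add: cyc_zero_word del: replicate_Suc)
    next
      case False
      then have "sum_list w \<noteq> 0" using zero_word_if_sum_list_0[OF len] by blast
      then have "rotr w \<noteq> zero_word (Suc n)" using len by (metis length_0_conv nat.distinct(1) sum_list_rotr sum_list_replicate mult_0_right)
      then show ?thesis using False len by (simp add: cyc_basis scal_apply basis_apply del: replicate_Suc)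
    qed
  qed
  ultimately show ?thesis using assms(1) unfolding g by simp
qed

lemma bounds_zero_word_coeff:
  assumes "even n" and "g \<in> bounds l q n"
  shows "g (zero_word (Suc n)) = 0"
proof -
  obtain h r where h: "h \<in> tens (Suc n)" and r: "r \<in> relW l q n" and g: "g = bdry l q (Suc n) h + r"
    using assms(2) unfolding bounds_iff by blast
  have "bdry l q (Suc n) h (zero_word (Suc n)) = 0"
  proof (rule linop_apply_eq_0[OF linop_bdry h])
    fix w :: "nat list" assume len: "length w = Suc (Suc n)"
    show "bdry l q (Suc n) (basis w) (zero_word (Suc n)) = 0"
    proof (cases "w = zero_word (Suc (Suc n))")
      case True
      obtain k where "n = 2 * k" using assms(1) by (auto elim: evenE)
      then have "(\<Sum>j\<le>Suc n. (-1::complex) ^ j) = (\<Sum>j<2 * Suc k. (-1) ^ j)"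
        by (simp add: lessThan_Suc_atMost)
      also have "\<dots> = 0" by (induction k) (simp_all add: numeral_2_eq_2)
      finally show ?thesis using True by (simp add: bdry_zero_word del: replicate_Suc)
    next
      case False
      then have "sum_list w \<noteq> 0" using zero_word_if_sum_list_0[OF len] by blast
      then show ?thesis
        using preserves_deg_bdry[of l q n] len unfolding preserves_deg_def by (metis sum_list_zero_word)
    qed
  qed
  then show ?thesis using relW_zero_word_coeff[OF assms(1) r] by (simp add: g)
qed

lemma hc_basis_odd: "hc_basis l q (2 * n + 1) []"
proof -
  have "z \<in> bounds l q (Suc (2 * n))" if "z \<in> cycles l q (Suc (2 * n))" for z
  proof -
    let ?c = "scal (z (zero_word (2 * n + 2))) (basis (zero_word (2 * n + 2)))"
    have "z - ?c \<in> bounds l q (Suc (2 * n))"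
      using that cycle_minus_constant_in_bounds[of z "2 * n"] by (simp add: cycles_def)
    moreover have "?c \<in> relW l q (Suc (2 * n))"
      using zero_word_in_relW_odd[of "Suc (2 * n)"] by simp
    ultimately show ?thesis using bounds_relW by fastforce
  qed
  then show ?thesis by (simp add: hc_basis_def)
qed

lemma hc_basis_even: "hc_basis l q (2 * n + 2) [basis (replicate (2 * n + 3) 0)]"
proof -
  have e: "2 * n + 2 = Suc (Suc (2 * n))" "2 * n + 3 = Suc (Suc (Suc (2 * n)))" by simp_all
  have "bdry l q (Suc (Suc (2 * n))) (basis (zero_word (Suc (Suc (Suc (2 * n)))))) \<in> relW l q (Suc (2 * n))"
    by (simp add: bdry_zero_word zero_word_in_relW_odd del: replicate_Suc)
  then have "basis (zero_word (Suc (Suc (Suc (2 * n))))) \<in> cycles l q (Suc (Suc (2 * n)))"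
    by (simp add: cycles_def del: replicate_Suc)
  moreover have "c 0 = 0"
    if "scal (c 0) (basis (zero_word (Suc (Suc (Suc (2 * n)))))) \<in> bounds l q (Suc (Suc (2 * n)))" for c
    using bounds_zero_word_coeff[OF _ that] by (simp add: scal_apply basis_apply del: replicate_Suc)
  moreover have "\<exists>c. z - scal (c (0::nat)) (basis (zero_word (Suc (Suc (Suc (2 * n)))))) \<in> bounds l q (Suc (Suc (2 * n)))"
    if "z \<in> cycles l q (Suc (Suc (2 * n)))" for z
    using cycle_minus_constant_in_bounds that by (fastforce simp: cycles_def)
  ultimately show ?thesis unfolding hc_basis_def e by auto
qed

section \<open>Degree zero\<close>

definition resonant :: "complex \<Rightarrow> complex \<Rightarrow> nat \<Rightarrow> bool" where
  "resonant l q a \<longleftrightarrow> a = 0 \<or> l * q ^ (a - 1) = 1"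

lemma bdry1_basis: "bdry l q (Suc 0) (basis [u, v]) = scal (1 - cyc_coeff l q [u, v]) (basis [u + v])"
proof -
  have "bdry l q (Suc 0) (basis [u, v]) = sface l q (Suc 0) 0 (basis [u, v]) + sface l q (Suc 0) (Suc 0) (basis [u, v])"
    by (simp add: bdry_eq_sum_sface)
  also have "\<dots> = basis [u + v] + scal (- cyc_coeff l q [u, v]) (basis [v + u])"
    by (simp add: sface_basis_lt sface_basis_eq merge_at_def rotr_def)
  also have "\<dots> = scal (1 - cyc_coeff l q [u, v]) (basis [u + v])"
    by (auto simp: fun_eq_iff scal_apply algebra_simps add.commute)
  finally show ?thesis .
qed

lemma bounds0_resonant_coeff:
  assumes "resonant l q S" and "g \<in> bounds l q 0"
  shows "g [S] = 0"
proof -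
  have resonance: "(l * q ^ (S - 1)) ^ v = 1" if "v \<le> S" for v
    using assms(1) that by (auto simp: resonant_def)
  obtain h r where h: "h \<in> tens (Suc 0)" and r: "r \<in> relW l q 0" and g: "g = bdry l q (Suc 0) h + r"
    using assms(2) unfolding bounds_iff by blast
  have "bdry l q (Suc 0) h [S] = 0"
  proof (rule linop_apply_eq_0[OF linop_bdry h])
    fix w :: "nat list" assume "length w = Suc (Suc 0)"
    then obtain u v where w: "w = [u, v]" by (cases w; cases "tl w") auto
    show "bdry l q (Suc 0) (basis w) [S] = 0"
      using resonance[of v] by (cases "u + v = S") (auto simp: w bdry1_basis cyc_coeff_def scal_apply basis_apply)
  qed
  moreover obtain f1 f2 where f: "f1 \<in> tens 0" "f2 \<in> tens 0"
    and r_eq: "r = (f1 - cyc l q 0 f1) + (f2 - cyc l q 0 f2)"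
    using r unfolding relW_iff by (auto simp: Tcyc_def)
  have "(\<lambda>f. f - cyc l q 0 f) f [S] = 0" if "f \<in> tens 0" for f
  proof (rule linop_apply_eq_0[OF linop_compose_sub[OF linop_ident linop_cyc] that])
    fix w :: "nat list" assume "length w = Suc 0"
    then obtain a where w: "w = [a]" by (auto simp: length_Suc_conv)
    show "(basis w - cyc l q 0 (basis w)) [S] = 0"
      using resonance[of S] by (cases "a = S") (simp_all add: w cyc_basis cyc_coeff_def rotr_def scal_apply basis_apply)
  qed
  ultimately show ?thesis using f by (simp add: g r_eq)
qed

lemma basis_in_bounds0:
  assumes "\<not> resonant l q a"
  shows "basis [a] \<in> bounds l q 0"
proof -
  have a: "Suc (a - Suc 0) = a" and ne: "l * q ^ (a - 1) \<noteq> 1" using assms by (auto simp: resonant_def)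
  define h where "h = scal (inverse (1 - l * q ^ (a - 1))) (basis [a - 1, 1])"
  have "bdry l q (Suc 0) h = scal (inverse (1 - l * q ^ (a - 1)) * (1 - l * q ^ (a - 1))) (basis [a])"
    unfolding h_def by (simp add: linop_scal[OF linop_bdry] bdry1_basis cyc_coeff_def a scal_scal)
  also have "\<dots> = basis [a]" using ne by simp
  finally have "basis [a] = bdry l q (Suc 0) h + 0" by simp
  then show ?thesis unfolding bounds_iff by (intro bexI[of _ h] bexI[of _ 0]) (auto simp: h_def)
qed

lemma sum_scal_basis_apply:
  "(\<Sum>i<length as. scal (c i) (basis [as ! i])) [a] = (\<Sum>i<length as. if as ! i = a then c i else 0)"
  by (auto simp: sum_fun_apply scal_apply basis_apply intro: sum.cong)

lemma sum_scal_basis_apply_nth: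
  assumes "distinct as" "j < length as"
  shows "(\<Sum>i<length as. scal (c i) (basis [as ! i])) [as ! j] = c j"
proof -
  have "(\<Sum>i<length as. if as ! i = as ! j then c i else 0) = (\<Sum>i<length as. if i = j then c i else 0)"
    using assms by (intro sum.cong refl) (simp add: nth_eq_iff_index_eq)
  then show ?thesis using assms(2) by (simp add: sum_scal_basis_apply)
qed

lemma tens0_minus_resonant_part_in_bounds:
  assumes "distinct as" and "set as = {a. resonant l q a}" and z: "z \<in> tens 0"
  shows "z - (\<Sum>i<length as. scal (z [as ! i]) (basis [as ! i])) \<in> bounds l q 0"
    (is "z - ?e \<in> _")
proof (rule bounds_span)
  show "fin_supp (z - ?e)" using tens_fin_supp[OF z] by simp
  fix w assume w: "w \<in> supp (z - ?e)"
  have "z - ?e \<in> tens 0" using z by simp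
  then obtain a where "w = [a]" using tens_len[OF _ w] by (auto simp: length_Suc_conv)
  moreover have "\<not> resonant l q a"
  proof
    assume "resonant l q a"
    then have "a \<in> set as" using assms(2) by blast
    then obtain j where "j < length as" "a = as ! j" by (metis in_set_conv_nth)
    then have "(z - ?e) [a] = 0" using assms(1) by (simp add: sum_scal_basis_apply_nth)
    then show False using w \<open>w = [a]\<close> by (simp add: supp_def)
  qed
  ultimately show "basis w \<in> bounds l q 0" by (simp add: basis_in_bounds0)
qed

lemma hc_basis_0:
  assumes "distinct as" and "set as = {a. resonant l q a}"
  shows "hc_basis l q 0 (map (\<lambda>a. basis [a]) as)"
proof -
  have map_nth: "(\<Sum>i<length (map (\<lambda>a. basis [a]) as). scal (c i) (map (\<lambda>a. basis [a]) as ! i))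
      = (\<Sum>i<length as. scal (c i) (basis [as ! i]))" for c
    by (intro sum.cong) auto
  show ?thesis
    unfolding hc_basis_def map_nth
  proof (intro conjI ballI allI impI)
    show "set (map (\<lambda>a. basis [a]) as) \<subseteq> cycles l q 0" by (auto simp: cycles_def)
  next
    fix c i assume b: "(\<Sum>i<length as. scal (c i) (basis [as ! i])) \<in> bounds l q 0"
      and i: "i < length (map (\<lambda>a. basis [a]) as)"
    then have "resonant l q (as ! i)" using assms(2) nth_mem[of i as] by auto
    from bounds0_resonant_coeff[OF this b] show "c i = 0"
      using sum_scal_basis_apply_nth[OF assms(1)] i by simp
  next
    fix z assume "z \<in> cycles l q 0"
    then show "\<exists>c. z - (\<Sum>i<length as. scal (c i) (basis [as ! i])) \<in> bounds l q 0"
      using tens0_minus_resonant_part_in_bounds[OF assms] by (intro exI[of _ "\<lambda>i. z [as ! i]"]) (simp add: cycles_def)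
  qed
qed

lemma power_inj_not_root_of_unity:
  fixes q :: complex
  assumes "q \<noteq> 0" and "\<forall>k::nat. k > 0 \<longrightarrow> q ^ k \<noteq> 1"
  shows "q ^ i = q ^ j \<longleftrightarrow> i = j"
proof -
  have "q ^ i \<noteq> q ^ j" if "i < j" for i j
  proof
    assume "q ^ i = q ^ j"
    also have "q ^ j = q ^ i * q ^ (j - i)" using that by (simp flip: power_add)
    finally have "q ^ (j - i) = 1" using assms(1) by simp
    then show False using assms(2) that by simp
  qed
  then show ?thesis by (metis linorder_neqE_nat)
qed

lemma resonant_iff_generic:
  assumes "\<forall>N. l \<noteq> inverse (q ^ N)"
  shows "resonant l q a \<longleftrightarrow> a = 0"
proof
  assume "resonant l q a"
  show "a = 0"
  proof (rule ccontr)
    assume "a \<noteq> 0"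
    then have "q ^ (a - 1) * l = 1" using \<open>resonant l q a\<close> by (simp add: resonant_def mult.commute)
    then have "l = inverse (q ^ (a - 1))" by (simp add: inverse_unique)
    then show False using assms by blast
  qed
qed (simp add: resonant_def)

lemma resonant_iff_special:
  assumes "q \<noteq> 0" and "\<forall>k::nat. k > 0 \<longrightarrow> q ^ k \<noteq> 1" and l: "l = inverse (q ^ N)"
  shows "resonant l q a \<longleftrightarrow> a = 0 \<or> a = N + 1"
proof -
  have "l * q ^ (a - 1) = 1 \<longleftrightarrow> q ^ (a - 1) = q ^ N"
    using assms(1) by (auto simp: l field_simps)
  also have "\<dots> \<longleftrightarrow> a - 1 = N" by (rule power_inj_not_root_of_unity[OF assms(1,2)])
  finally show ?thesis by (auto simp: resonant_def)
qed

theorem mainTheorem7: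
  fixes q l :: complex
  assumes "q \<noteq> 0" and "\<forall>k::nat. k > 0 \<longrightarrow> q ^ k \<noteq> 1" and "l \<noteq> 0"
  shows "(\<forall>n::nat. hc_basis l q (2 * n + 1) [])
       \<and> (\<forall>n::nat. hc_basis l q (2 * n + 2) [basis (replicate (2 * n + 3) 0)])
       \<and> ((\<forall>N::nat. l \<noteq> inverse (q ^ N)) \<longrightarrow> hc_basis l q 0 [basis [0]])
       \<and> (\<forall>N::nat. l = inverse (q ^ N) \<longrightarrow> hc_basis l q 0 [basis [0], basis [N + 1]])"
proof (intro conjI allI impI)
  fix n
  show "hc_basis l q (2 * n + 1) []" by (rule hc_basis_odd)
  show "hc_basis l q (2 * n + 2) [basis (replicate (2 * n + 3) 0)]" by (rule hc_basis_even)
next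
  assume "\<forall>N. l \<noteq> inverse (q ^ N)"
  then have "set [0] = {a. resonant l q a}" by (simp add: resonant_iff_generic)
  then show "hc_basis l q 0 [basis [0]]" using hc_basis_0[of "[0]"] by simp
next
  fix N assume "l = inverse (q ^ N)"
  then have "set [0, N + 1] = {a. resonant l q a}" using resonant_iff_special[OF assms(1,2)] by auto
  then show "hc_basis l q 0 [basis [0], basis [N + 1]]" using hc_basis_0[of "[0, N + 1]"] by simp
qed

end
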